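(* Let $n\ge 3$. For every $\epsilon>0$ and $t\in(0,1]$ there exists $\delta_0\in(0,\tfrac12]$ such that the following holds for all $\delta\in(0,\delta_0]$. Let $F\subset C^2([0,1]^{n-1},[0,1])$ be a non-empty, $\delta$-separated $(\delta,t,\delta^{-\epsilon})$-set which is a cinematic family. Then $$\int_{[0,1]^n}\Big(\sum_{f\in F}\chi_{f^\delta}(x)\Big)^2\,dx\lesssim\delta^{-2\epsilon}|F|^2\delta^{1+t},$$ where the implicit constant depends only on $n$ and the parameters of the cinematic family.
   Context: $|F|$ is cardinality, $\chi_A$ the indicator of $A$. The metric on $C^2([0,1]^{n-1},[0,1])$ is the one induced by the $C^2$ norm. $|A|_\delta$ is the $\delta$-covering number; a bounded set $P$ in a metric space $X$ is a $(\delta,t,C)$-set if $|P\cap B(x,r)|_\delta\le Cr^t|P|_\delta$ for all $x\in X$, $r\ge\delta$. For $f\in C^2([0,1]^{n-1})$, $f^\delta:=\{(x,y)\in[0,1]^{n-1}\times\mathbb{R}: |y-f(x)|\le\delta\}$. Cinematic family: for a domain $U\subset\mathbb{R}^k$, $F\subset C^2(U)$ is a cinematic family with cinematic constant $K$, doubling constant $D$ and modulus of continuity $\alpha$ if: (1) $F$ lies in a ball of diameter $K$ in $C^2(U)$; (2) $F$ is doubling with constant at most $D$; (3) for all $f,g\in F$ and $\xi\in S^{k-1}$, $\inf_{x\in U}\{|f-g|(x)+|\nabla f-\nabla g|(x)+|\nabla_\xi\nabla_\xi(f-g)(x)|\}\ge K^{-1}\|f-g\|_{C^2(U)}$, where $\nabla_\xi\nabla_\xi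 h=\langle\nabla^2h\,\xi,\xi\rangle$; (4) there is an increasing continuous $\alpha:[0,1]\to[0,\infty)$, $\alpha(0)=0$, $0<\alpha(s)\le K^{-1}s$ for $s\in(0,1]$, such that for all $f,g\in F$, $\xi\in S^{k-1}$, sufficiently small $\eta>0$ and $x,y\in U$ with $|x-y|\le\alpha(\eta)$: $|\nabla_\xi\nabla_\xi(f-g)(x)-\nabla_\xi\nabla_\xi(f-g)(y)|\le\eta$. *)

theory Defs
  imports "HOL-Analysis.Analysis"
begin

text \<open>Points of [0,1]^(n-1) are vectors of type real^'m with CARD('m) = n - 1.\<close>

definition unit_cube :: "(real^'m) set" where
  "unit_cube = cbox 0 1"

definition C2_witness ::
  "(real^'m) set \<Rightarrow> (real^'m \<Rightarrow> real) \<Rightarrow> (real^'m \<Rightarrow> real^'m) \<Rightarrow> (real^'m \<Rightarrow> real^'m^'m) \<Rightarrow> bool" where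
  "C2_witness U f Df D2f \<longleftrightarrow>
     (\<forall>x\<in>U. (f has_derivative (\<lambda>h. Df x \<bullet> h)) (at x within U)) \<and>
     (\<forall>x\<in>U. (Df has_derivative (\<lambda>h. D2f x *v h)) (at x within U)) \<and>
     continuous_on U D2f"

definition C2_on :: "(real^'m) set \<Rightarrow> (real^'m \<Rightarrow> real) \<Rightarrow> bool" where
  "C2_on U f \<longleftrightarrow> (\<exists>Df D2f. C2_witness U f Df D2f)"

definition grad_on :: "(real^'m) set \<Rightarrow> (real^'m \<Rightarrow> real) \<Rightarrow> real^'m \<Rightarrow> real^'m" where
  "grad_on U f = (SOME Df. \<exists>D2f. C2_witness U f Df D2f)"

definition hess_on :: "(real^'m) set \<Rightarrow> (real^'m \<Rightarrow> real) \<Rightarrow> real^'m \<Rightarrow> real^'m^'m" where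
  "hess_on U f = (SOME D2f. C2_witness U f (grad_on U f) D2f)"

definition dd2 :: "(real^'m) set \<Rightarrow> (real^'m \<Rightarrow> real) \<Rightarrow> real^'m \<Rightarrow> real^'m \<Rightarrow> real" where
  "dd2 U h \<xi> x = (hess_on U h x *v \<xi>) \<bullet> \<xi>"

definition c2norm :: "(real^'m) set \<Rightarrow> (real^'m \<Rightarrow> real) \<Rightarrow> real" where
  "c2norm U f = (SUP x\<in>U. \<bar>f x\<bar>) + (SUP x\<in>U. norm (grad_on U f x))
                + (SUP x\<in>U. onorm (\<lambda>v. hess_on U f x *v v))"

definition c2dist :: "(real^'m) set \<Rightarrow> (real^'m \<Rightarrow> real) \<Rightarrow> (real^'m \<Rightarrow> real) \<Rightarrow> real" where
  "c2dist U f g = c2norm U (\<lambda>x. f x - g x)"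

definition C2X :: "(real^'m \<Rightarrow> real) set" where
  "C2X = {f. C2_on unit_cube f \<and> (\<forall>x\<in>unit_cube. 0 \<le> f x \<and> f x \<le> 1)}"

definition covnum :: "'a set \<Rightarrow> ('a \<Rightarrow> 'a \<Rightarrow> real) \<Rightarrow> 'a set \<Rightarrow> real \<Rightarrow> nat" where
  "covnum X d A \<delta> = Inf (card ` {C. finite C \<and> C \<subseteq> X \<and> A \<subseteq> (\<Union>c\<in>C. {y. d c y \<le> \<delta>})})"

definition delta_t_C_set :: "'a set \<Rightarrow> ('a \<Rightarrow> 'a \<Rightarrow> real) \<Rightarrow> 'a set \<Rightarrow> real \<Rightarrow> real \<Rightarrow> real \<Rightarrow> bool" where
  "delta_t_C_set X d P \<delta> t C \<longleftrightarrow>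
     (\<exists>x0\<in>X. \<exists>R. \<forall>y\<in>P. d x0 y \<le> R) \<and>
     (\<forall>x\<in>X. \<forall>r\<ge>\<delta>. real (covnum X d (P \<inter> {y. d x y \<le> r}) \<delta>)
                      \<le> C * r powr t * real (covnum X d P \<delta>))"

definition separated :: "('a \<Rightarrow> 'a \<Rightarrow> real) \<Rightarrow> 'a set \<Rightarrow> real \<Rightarrow> bool" where
  "separated d P \<delta> \<longleftrightarrow> (\<forall>x\<in>P. \<forall>y\<in>P. x \<noteq> y \<longrightarrow> d x y \<ge> \<delta>)"

definition doubling :: "('a \<Rightarrow> 'a \<Rightarrow> real) \<Rightarrow> 'a set \<Rightarrow> real \<Rightarrow> bool" where
  "doubling d P D \<longleftrightarrow> (\<forall>x\<in>P. \<forall>r>0. \<exists>C. finite C \<and> C \<subseteq> P \<and> real (card C) \<le> D \<and>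
      {y\<in>P. d x y \<le> r} \<subseteq> (\<Union>c\<in>C. {y. d c y \<le> r / 2}))"

text \<open>Cinematic family with cinematic constant K, doubling constant D, modulus of
  continuity \<alpha>; \<eta>0 is the threshold below which condition (4) is required
  ("sufficiently small \<eta>").\<close>
definition cinematic ::
  "(real^'m) set \<Rightarrow> real \<Rightarrow> real \<Rightarrow> (real \<Rightarrow> real) \<Rightarrow> real \<Rightarrow> (real^'m \<Rightarrow> real) set \<Rightarrow> bool" where
  "cinematic U K D \<alpha> \<eta>0 F \<longleftrightarrow>
     0 < K \<and> (\<forall>f\<in>F. C2_on U f) \<and>
     (\<exists>g. C2_on U g \<and> (\<forall>f\<in>F. c2dist U f g \<le> K / 2)) \<and>
     doubling (c2dist U) F D \<and>
     (\<forall>f\<in>F. \<forall>g\<in>F. \<forall>\<xi>::real^'m. norm \<xi> = 1 \<longrightarrow>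
        (INF x\<in>U. \<bar>f x - g x\<bar> + norm (grad_on U (\<lambda>y. f y - g y) x)
                  + \<bar>dd2 U (\<lambda>y. f y - g y) \<xi> x\<bar>) \<ge> c2dist U f g / K) \<and>
     mono_on {0..1} \<alpha> \<and> continuous_on {0..1} \<alpha> \<and> \<alpha> 0 = 0 \<and>
     (\<forall>s\<in>{0..1}. 0 \<le> \<alpha> s) \<and> (\<forall>s\<in>{0<..1}. 0 < \<alpha> s \<and> \<alpha> s \<le> s / K) \<and>
     0 < \<eta>0 \<and>
     (\<forall>f\<in>F. \<forall>g\<in>F. \<forall>\<xi>::real^'m. \<forall>\<eta>. \<forall>x\<in>U. \<forall>y\<in>U.
        norm \<xi> = 1 \<and> 0 < \<eta> \<and> \<eta> \<le> \<eta>0 \<and> \<eta> \<le> 1 \<and> norm (x - y) \<le> \<alpha> \<eta> \<longrightarrow>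
        \<bar>dd2 U (\<lambda>z. f z - g z) \<xi> x - dd2 U (\<lambda>z. f z - g z) \<xi> y\<bar> \<le> \<eta>)"

definition fdelta :: "(real^'m \<Rightarrow> real) \<Rightarrow> real \<Rightarrow> ((real^'m) \<times> real) set" where
  "fdelta f \<delta> = {(x, y). x \<in> unit_cube \<and> \<bar>y - f x\<bar> \<le> \<delta>}"

end

theory Submission
  imports Defs
begin

text \<open>
  Expanding the square, the integral is the sum over pairs \<open>(f, g)\<close> of the measure of
  \<open>f^\<delta> \<inter> g^\<delta>\<close>, which by Fubini is at most \<open>2 \<delta>\<close> times the measure of the set where
  \<open>\<bar>f - g\<bar> \<le> 2 \<delta>\<close>. Divided by its \<open>C\<^sup>2\<close> norm, \<open>h = f - g\<close> satisfies, by the cinematic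
  condition, a lower bound \<open>\<kappa> \<le> \<bar>h\<bar> + \<bar>\<nabla>h\<bar> + \<bar>\<nabla>\<^sub>\<xi>\<nabla>\<^sub>\<xi>h\<bar>\<close> everywhere. For such functions
  the sublevel set \<open>{\<bar>h\<bar> \<le> s}\<close> has measure \<open>O(s log(1/s))\<close>: on small cubes either some
  partial derivative of \<open>h\<close> is large, and the sublevel set is a thin slab, or \<open>h\<close> is flat with
  a definite Hessian, and the sublevel set is covered by dyadic annuli around the minimiser of
  \<open>\<pm>h\<close> on which \<open>\<bar>\<nabla>h\<bar>\<close> is comparable to the distance to the minimiser. Hence a pair at
  distance \<open>r\<close> contributes \<open>O(\<delta>\<^sup>2 log(1/\<delta>) / r)\<close>. Summing over \<open>g\<close> in dyadic shells of
  \<open>r\<close>, whose sizes are controlled by the \<open>(\<delta>, t)\<close>-set and doubling conditions, gives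
  \<open>O(\<delta>^(1+t-\<epsilon>) |F| log\<^sup>2(1/\<delta>))\<close> for each \<open>f\<close>, and for small \<open>\<delta>\<close> the logarithm is absorbed
  into another factor \<open>\<delta>^(-\<epsilon>)\<close>.
\<close>

lemma convex_segment_point:
  assumes "convex C" "x \<in> C" "y \<in> C" "\<tau> \<in> {0..1::real}"
  shows "x + \<tau> *\<^sub>R (y - x) \<in> C"
proof -
  have "x + \<tau> *\<^sub>R (y - x) = (1 - \<tau>) *\<^sub>R x + \<tau> *\<^sub>R y" by (simp add: algebra_simps)
  then show ?thesis using convexD_alt[OF assms(1-3)] assms(4) by simp
qed

lemma mvt_segment:
  fixes f :: "'a::real_normed_vector \<Rightarrow> real"
  assumes "convex Q" "x \<in> Q" "y \<in> Q"
    and df: "\<And>z. z \<in> Q \<Longrightarrow> (f has_derivative D z) (at z within Q)"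
  shows "\<exists>\<tau>\<in>{0..1}. f y - f x = D (x + \<tau> *\<^sub>R (y - x)) (y - x)"
proof -
  define p where "p \<tau> = x + \<tau> *\<^sub>R (y - x)" for \<tau> :: real
  have pQ: "p ` {0..1} \<subseteq> Q" unfolding p_def using convex_segment_point[OF assms(1-3)] by auto
  have "((\<lambda>\<tau>. f (p \<tau>)) has_derivative (\<lambda>h. D (p \<tau>) (h *\<^sub>R (y - x)))) (at \<tau> within {0..1})"
    if "\<tau> \<in> {0..1}" for \<tau>
  proof -
    have "(p has_derivative (\<lambda>h. h *\<^sub>R (y - x))) (at \<tau> within {0..1})"
      unfolding p_def by (auto intro!: derivative_eq_intros)
    moreover have "(f has_derivative D (p \<tau>)) (at (p \<tau>) within p ` {0..1})"
      using df pQ that has_derivative_subset by blast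
    ultimately show ?thesis using diff_chain_within by (fastforce simp: o_def)
  qed
  then have "\<exists>\<tau>\<in>{0..1}. f (p 1) - f (p 0) = D (p \<tau>) ((1 - 0) *\<^sub>R (y - x))"
    by (intro mvt_very_simple) auto
  then show ?thesis unfolding p_def by auto
qed

lemma sign_definite_of_abs_ge:
  fixes f :: "'a::topological_space \<Rightarrow> real"
  assumes "connected T" "continuous_on T f" "\<And>x. x \<in> T \<Longrightarrow> b \<le> \<bar>f x\<bar>" "0 < b"
  shows "(\<forall>x\<in>T. b \<le> f x) \<or> (\<forall>x\<in>T. b \<le> - f x)"
proof (rule ccontr)
  assume "\<not> ?thesis"
  then obtain x1 x2 where x: "x1 \<in> T" "x2 \<in> T" "f x1 < b" "- f x2 < b" by force
  then have "f x1 \<le> 0" "0 \<le> f x2" using assms(3)[of x1] assms(3)[of x2] by auto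
  moreover have "connected (f ` T)" by (rule connected_continuous_image[OF assms(2,1)])
  ultimately have "0 \<in> f ` T" using x connectedD_interval by (metis imageI)
  then show False using assms(3,4) by force
qed

lemma exists_coordinate_large:
  fixes x :: "real^'m"
  obtains i where "norm x \<le> real CARD('m) * \<bar>x$i\<bar>"
proof -
  obtain i where i: "\<bar>x$i\<bar> = Max (range (\<lambda>j. \<bar>x$j\<bar>))"
    using Max_in[of "range (\<lambda>j. \<bar>x$j\<bar>)"] by fastforce
  have "norm x \<le> (\<Sum>j\<in>UNIV. \<bar>x$j\<bar>)" by (rule norm_le_l1_cart)
  also have "\<dots> \<le> real CARD('m) * \<bar>x$i\<bar>"
    using sum_bounded_above[of UNIV "\<lambda>j. \<bar>x$j\<bar>" "\<bar>x$i\<bar>"] by (simp add: i)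
  finally show ?thesis by (rule that)
qed

lemma quadratic_form_lower_bound:
  assumes L: "bounded_linear L" and b: "\<And>\<xi>. norm \<xi> = 1 \<Longrightarrow> \<beta> \<le> L \<xi> \<bullet> \<xi>"
  shows "\<beta> * (norm d)\<^sup>2 \<le> L d \<bullet> (d::'a::real_inner)"
proof (cases "d = 0")
  case True
  then show ?thesis using L by (simp add: linear_simps)
next
  case False
  define \<xi> where "\<xi> = (1 / norm d) *\<^sub>R d"
  have "norm \<xi> = 1" unfolding \<xi>_def using False by simp
  then have "\<beta> * (norm d)\<^sup>2 \<le> (L \<xi> \<bullet> \<xi>) * (norm d)\<^sup>2" using b by (simp add: mult_right_mono)
  also have "\<dots> = L d \<bullet> d"
    unfolding \<xi>_def using L False by (simp add: linear_simps power2_eq_square)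
  finally show ?thesis .
qed

lemma continuous_on_quadratic_form:
  fixes M :: "'a::topological_space \<Rightarrow> real^'m^'m"
  assumes "continuous_on S M"
  shows "continuous_on (S \<times> T) (\<lambda>(x,\<xi>). (M x *v \<xi>) \<bullet> \<xi>)"
proof -
  have e: "(\<lambda>(x,\<xi>). (M x *v \<xi>) \<bullet> \<xi>)
      = (\<lambda>p. \<Sum>i\<in>UNIV. (\<Sum>j\<in>UNIV. M (fst p) $ i $ j * snd p $ j) * snd p $ i)"
    by (simp add: fun_eq_iff case_prod_unfold inner_vec_def matrix_vector_mult_def)
  have M: "continuous_on (S \<times> T) (\<lambda>p. M (fst p) $ i $ j)" for i j
    by (intro continuous_on_component continuous_on_compose2[OF assms continuous_on_fst]) auto
  have \<xi>: "continuous_on (S \<times> T) (\<lambda>p. snd p $ i)" for i :: 'm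
    by (intro continuous_on_component continuous_on_snd continuous_on_id)
  show ?thesis unfolding e by (intro continuous_on_sum continuous_on_mult M \<xi>)
qed

lemma le_two_power_nat_ceiling_log:
  assumes "0 < x"
  shows "x \<le> 2 ^ nat \<lceil>log 2 x\<rceil>"
proof -
  have "x = 2 powr (log 2 x)" using assms by simp
  also have "\<dots> \<le> 2 powr (real (nat \<lceil>log 2 x\<rceil>))" by (intro powr_mono) linarith+
  finally show ?thesis by (simp add: powr_realpow)
qed

lemma dyadic_scale:
  fixes s x :: real
  assumes "0 < s" "s < x" "x \<le> 2 ^ J * s"
  obtains j where "1 \<le> j" "j \<le> J" "2 ^ j * s < 2 * x" "x \<le> 2 ^ j * s"
proof -
  define j where "j = (LEAST j. x \<le> 2 ^ j * s)"
  have j: "x \<le> 2 ^ j * s" unfolding j_def by (rule LeastI[of _ J]) (rule assms(3))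
  have "j \<le> J" unfolding j_def by (rule Least_le) (rule assms(3))
  have "j \<noteq> 0" using j assms(2) by (cases j) auto
  then have "\<not> x \<le> 2 ^ (j - 1) * s" unfolding j_def by (intro not_less_Least) auto
  moreover have "(2::real) ^ j = 2 * 2 ^ (j - 1)" using \<open>j \<noteq> 0\<close> by (cases j) auto
  ultimately show ?thesis using that[of j] j \<open>j \<le> J\<close> \<open>j \<noteq> 0\<close> by simp
qed

section \<open>Sets with short fibres in a coordinate direction\<close>

lemma disjoint_translates_of_short_fibres:
  fixes S :: "(real^'m) set"
  assumes short: "\<And>x t. x \<in> S \<Longrightarrow> x + t *\<^sub>R axis i 1 \<in> S \<Longrightarrow> \<bar>t\<bar> \<le> w"
    and "w < c" "k \<noteq> l"
  shows "disjnt ((+) ((real k * c) *\<^sub>R axis i 1) ` S) ((+) ((real l * c) *\<^sub>R axis i 1) ` S)"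
proof (rule ccontr)
  assume "\<not> ?thesis"
  then obtain x y where x: "x \<in> S" and y: "y \<in> S"
    and eq: "(real k * c) *\<^sub>R axis i 1 + x = (real l * c) *\<^sub>R axis i 1 + y"
    by (auto simp: disjnt_def)
  have "y = x + ((real k - real l) * c) *\<^sub>R axis i 1"
    using eq by (simp add: algebra_simps scaleR_left_diff_distrib)
  then have "\<bar>(real k - real l) * c\<bar> \<le> w" using short[OF x] y by simp
  moreover have "0 \<le> c" using short[OF x, of 0] x \<open>w < c\<close> by simp
  moreover have "1 \<le> \<bar>real k - real l\<bar>" using \<open>k \<noteq> l\<close> by linarith
  ultimately have "c \<le> w" using mult_right_mono[of 1 "\<bar>real k - real l\<bar>" c] by (simp add: abs_mult)
  with \<open>w < c\<close> show False by linarith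
qed

lemma measure_stretched_cbox:
  fixes a b :: "real^'m"
  assumes side: "\<And>j. b$j - a$j = \<tau>" and "0 \<le> \<tau>" "0 \<le> d"
  shows "measure lebesgue (cbox a (b + d *\<^sub>R axis i 1)) = (\<tau> + d) * \<tau> ^ (CARD('m) - 1)"
proof -
  have side': "(b + d *\<^sub>R axis i 1)$j - a$j = \<tau> + (if j = i then d else 0)" for j
    using side by (simp add: axis_def)
  then have "a \<in> cbox a (b + d *\<^sub>R axis i 1)"
    using assms unfolding mem_box_cart by (smt (verit))
  then have "cbox a (b + d *\<^sub>R axis i 1) \<noteq> {}" by blast
  then have "measure lebesgue (cbox a (b + d *\<^sub>R axis i 1)) = (\<Prod>j\<in>UNIV. (b + d *\<^sub>R axis i 1)$j - a$j)"
    by (simp add: content_cbox_cart)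
  also have "\<dots> = (\<Prod>j\<in>UNIV. \<tau> + (if j = i then d else 0))"
    by (simp only: side')
  also have "\<dots> = (\<tau> + d) * (\<Prod>j\<in>UNIV-{i}. \<tau> + (if j = i then d else 0))"
    by (subst prod.remove[of UNIV i]) auto
  also have "(\<Prod>j\<in>UNIV-{i}. \<tau> + (if j = i then d else 0)) = \<tau> ^ (CARD('m) - 1)"
    by (simp add: card_Diff_singleton)
  finally show ?thesis .
qed

text \<open>If every line in direction \<open>i\<close> meets \<open>S\<close> in a set of diameter at most \<open>w\<close>, then about
  \<open>\<tau> / w\<close> disjoint translates of \<open>S\<close> in direction \<open>i\<close> fit into a box of comparable size.\<close>

lemma measure_le_of_short_fibres:
  fixes S :: "(real^'m) set"
  assumes S: "S \<in> sets lebesgue" "S \<subseteq> cbox a b" and side: "\<And>j. b$j - a$j = \<tau>"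
    and "0 \<le> \<tau>" "0 < w"
    and short: "\<And>x t. x \<in> S \<Longrightarrow> x + t *\<^sub>R axis i 1 \<in> S \<Longrightarrow> \<bar>t\<bar> \<le> w"
  shows "measure lebesgue S \<le> 3 * w * \<tau> ^ (CARD('m) - 1)"
proof -
  define M :: nat where "M = nat \<lceil>\<tau> / w\<rceil> + 1"
  define T where "T k = (+) ((real k * (2 * w)) *\<^sub>R axis i 1) ` S" for k :: nat
  have "\<tau> / w \<le> real M" unfolding M_def by linarith
  then have M: "\<tau> \<le> w * real M" "1 \<le> M" using \<open>0 < w\<close> by (auto simp: field_simps M_def)
  have Sm: "S \<in> lmeasurable" using S fmeasurableI2[OF lmeasurable_cbox] by blast
  have Tm: "T k \<in> lmeasurable" and measure_T: "measure lebesgue (T k) = measure lebesgue S" for k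
    unfolding T_def by (rule measurable_translation[OF Sm], rule measure_translation)
  have T_sub: "T k \<subseteq> cbox a (b + (2 * w * real M) *\<^sub>R axis i 1)" if "k < M" for k
  proof
    fix y assume "y \<in> T k"
    define e where "e = real k * (2 * w)"
    obtain x where "x \<in> S" and y: "y = e *\<^sub>R axis i 1 + x"
      using \<open>y \<in> T k\<close> unfolding T_def e_def by auto
    then have x: "a$j \<le> x$j \<and> x$j \<le> b$j" for j using S by (auto simp: mem_box_cart)
    have "0 \<le> e" "e \<le> 2 * w * real M"
      using that \<open>0 < w\<close> unfolding e_def by auto
    then show "y \<in> cbox a (b + (2 * w * real M) *\<^sub>R axis i 1)"
      unfolding y mem_box_cart using x by (auto simp: axis_def) (smt (verit) x)+
  qed
  have "real M * measure lebesgue S = (\<Sum>k<M. measure lebesgue (T k))"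
    by (simp add: measure_T)
  also have "\<dots> = measure lebesgue (\<Union>k<M. T k)"
    using disjoint_translates_of_short_fibres[OF short, where c = "2 * w"] \<open>0 < w\<close> Tm
    by (intro measure_UNION'[symmetric]) (auto simp: pairwise_def T_def)
  also have "\<dots> \<le> measure lebesgue (cbox a (b + (2 * w * real M) *\<^sub>R axis i 1))"
    using T_sub Tm by (intro measure_mono_fmeasurable) auto
  also have "\<dots> = (\<tau> + 2 * w * real M) * \<tau> ^ (CARD('m) - 1)"
    using side \<open>0 \<le> \<tau>\<close> \<open>0 < w\<close> by (intro measure_stretched_cbox) auto
  also have "\<dots> \<le> (3 * w * real M) * \<tau> ^ (CARD('m) - 1)"
    using M \<open>0 \<le> \<tau>\<close> by (intro mult_right_mono) auto
  finally show ?thesis using M by (simp add: algebra_simps)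
qed

section \<open>Cubes and grids\<close>

definition cube :: "real^'m \<Rightarrow> real \<Rightarrow> (real^'m) set" where
  "cube a L = cbox a (\<chi> j. a$j + L)"

lemma mem_cube: "x \<in> cube a L \<longleftrightarrow> (\<forall>j. a$j \<le> x$j \<and> x$j \<le> a$j + L)"
  unfolding cube_def mem_box_cart by simp

lemma convex_cube: "convex (cube a L)"
  unfolding cube_def by (rule convex_box)

lemma compact_cube: "compact (cube a L)"
  unfolding cube_def by (rule compact_cbox)

lemma lmeasurable_cube: "cube a L \<in> lmeasurable"
  unfolding cube_def by simp

lemma cube_0_1: "cube (0::real^'m) 1 = cbox 0 1"
proof -
  have "(\<chi> j. (0::real^'m)$j + 1) = 1" by (simp add: vec_eq_iff)
  then show ?thesis unfolding cube_def by simp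
qed

lemma measure_cube:
  assumes "0 \<le> L"
  shows "measure lebesgue (cube (a::real^'m) L) = L ^ CARD('m)"
proof -
  have "a \<in> cube a L" using assms by (simp add: mem_cube)
  then have "cbox a (\<chi> j. a$j + L) \<noteq> {}" unfolding cube_def by blast
  then show ?thesis unfolding cube_def by (simp add: content_cbox_cart)
qed

lemma norm_diff_le_cube:
  fixes x y :: "real^'m"
  assumes "x \<in> cube a \<tau>" "y \<in> cube a \<tau>"
  shows "norm (y - x) \<le> real CARD('m) * \<tau>"
proof -
  have "norm (y - x) \<le> (\<Sum>j\<in>UNIV. \<bar>(y - x)$j\<bar>)" by (rule norm_le_l1_cart)
  also have "\<dots> \<le> real CARD('m) * \<tau>"
  proof (rule sum_bounded_above[of UNIV, simplified])
    fix j
    have "a$j \<le> x$j" "x$j \<le> a$j + \<tau>" "a$j \<le> y$j" "y$j \<le> a$j + \<tau>"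
      using assms unfolding mem_cube by auto
    then show "\<bar>(y - x)$j\<bar> \<le> \<tau>" by simp
  qed
  finally show ?thesis .
qed

lemma mem_cube_around:
  fixes x y :: "real^'m"
  assumes "norm (y - x) \<le> r"
  shows "y \<in> cube (\<chi> i. x$i - r) (2 * r)"
  unfolding mem_cube
proof
  fix i
  have "\<bar>(y - x)$i\<bar> \<le> r" using component_le_norm_cart[of "y - x" i] assms by linarith
  then show "(\<chi> i. x$i - r)$i \<le> y$i \<and> y$i \<le> (\<chi> i. x$i - r)$i + 2 * r" by auto
qed

definition grid_index :: "nat \<Rightarrow> ('m::finite \<Rightarrow> nat) set" where
  "grid_index n = PiE UNIV (\<lambda>_. {..<n})"

definition grid_cell :: "real^'m \<Rightarrow> real \<Rightarrow> nat \<Rightarrow> ('m \<Rightarrow> nat) \<Rightarrow> (real^'m) set" where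
  "grid_cell a L n k = cube (\<chi> j. a$j + L / n * k j) (L / n)"

lemma finite_grid_index: "finite (grid_index n)"
  unfolding grid_index_def by (simp add: finite_PiE)

lemma card_grid_index: "card (grid_index n :: ('m::finite \<Rightarrow> nat) set) = n ^ CARD('m)"
  unfolding grid_index_def by (simp add: card_PiE)

lemma exists_unit_interval_index:
  assumes "1 \<le> n" "0 \<le> y" "y \<le> real n"
  obtains k where "k < n" "real k \<le> y" "y \<le> real k + 1"
proof (cases "nat \<lfloor>y\<rfloor> < n")
  case True
  then show ?thesis using that[of "nat \<lfloor>y\<rfloor>"] assms by linarith
next
  case False
  then have "real n \<le> real (nat \<lfloor>y\<rfloor>)" by simp
  also have "\<dots> \<le> y" using assms(2) by linarith
  finally show ?thesis using that[of "n - 1"] assms by (simp add: of_nat_diff)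
qed

lemma grid_cell_cover:
  assumes n: "1 \<le> n" and L: "0 < L" and x: "x \<in> cube a L"
  shows "\<exists>k\<in>grid_index n. x \<in> grid_cell a L n k"
proof -
  define y where "y j = (x$j - a$j) * n / L" for j
  have "0 \<le> y j \<and> y j \<le> real n" for j
  proof -
    have "a$j \<le> x$j" "x$j \<le> a$j + L" using x unfolding mem_cube by auto
    then have "0 \<le> (x$j - a$j) * n" "(x$j - a$j) * n \<le> L * n" by (simp_all add: mult_right_mono)
    then show ?thesis unfolding y_def using L by (simp add: field_simps)
  qed
  then have "\<forall>j. \<exists>k. k < n \<and> real k \<le> y j \<and> y j \<le> real k + 1"
    using exists_unit_interval_index[OF n] by metis
  then obtain k where k: "\<And>j. k j < n \<and> real (k j) \<le> y j \<and> y j \<le> real (k j) + 1"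
    by metis
  have "x \<in> grid_cell a L n k"
    unfolding grid_cell_def mem_cube
  proof
    fix j
    have "x$j = a$j + L / n * y j" unfolding y_def using L n by (simp add: field_simps)
    moreover have "L / n * k j \<le> L / n * y j" "L / n * y j \<le> L / n * (k j + 1)"
      using k[of j] L by (intro mult_left_mono; simp)+
    ultimately show "(\<chi> j. a$j + L / n * k j)$j \<le> x$j \<and> x$j \<le> (\<chi> j. a$j + L / n * k j)$j + L / n"
      by (simp add: algebra_simps)
  qed
  moreover have "k \<in> grid_index n" unfolding grid_index_def using k by auto
  ultimately show ?thesis by blast
qed

lemma grid_cell_subset_cube:
  assumes "k \<in> grid_index n" "0 \<le> L"
  shows "grid_cell a L n k \<subseteq> cube a L"
proof
  fix x assume x: "x \<in> grid_cell a L n k"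
  show "x \<in> cube a L" unfolding mem_cube
  proof
    fix j
    have kj: "k j < n" using assms(1) unfolding grid_index_def by auto
    then have "L / n * (real (k j) + 1) \<le> L / n * n"
      using assms(2) by (intro mult_left_mono) auto
    then have "L / n * k j + L / n \<le> L" using kj by (simp add: algebra_simps)
    moreover have "0 \<le> L / n * k j" using assms(2) by simp
    moreover have "a$j + L / n * k j \<le> x$j" "x$j \<le> a$j + L / n * k j + L / n"
      using x unfolding grid_cell_def mem_cube by auto
    ultimately show "a$j \<le> x$j \<and> x$j \<le> a$j + L" by linarith
  qed
qed

lemma measure_le_grid:
  fixes S :: "(real^'m) set"
  assumes S: "S \<in> sets lebesgue" "S \<subseteq> cube a L" and n: "1 \<le> n" and L: "0 < L"
    and cell: "\<And>k. k \<in> grid_index n \<Longrightarrow> measure lebesgue (S \<inter> grid_cell a L n k) \<le> M"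
  shows "measure lebesgue S \<le> real n ^ CARD('m) * M"
proof -
  have cell_m: "S \<inter> grid_cell a L n k \<in> lmeasurable" for k
    using S fmeasurableI2[OF lmeasurable_cube] unfolding grid_cell_def cube_def by blast
  have "measure lebesgue (\<Union>k\<in>grid_index n. S \<inter> grid_cell a L n k)
      \<le> (\<Sum>k\<in>grid_index n. measure lebesgue (S \<inter> grid_cell a L n k))"
    by (rule measure_UNION_le[OF finite_grid_index]) (use cell_m in auto)
  moreover have "(\<Union>k\<in>grid_index n. S \<inter> grid_cell a L n k) = S"
    using grid_cell_cover[OF n L] S(2) by blast
  ultimately have "measure lebesgue S \<le> (\<Sum>k\<in>grid_index n. measure lebesgue (S \<inter> grid_cell a L n k))"
    by simp
  also have "\<dots> \<le> (\<Sum>k\<in>(grid_index n :: ('m \<Rightarrow> nat) set). M)" using cell by (intro sum_mono) auto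
  also have "\<dots> = real n ^ CARD('m) * M" by (simp add: card_grid_index)
  finally show ?thesis .
qed

section \<open>Sublevel sets of nondegenerate functions\<close>

locale nondegenerate =
  fixes u :: "real^'m \<Rightarrow> real" and G :: "real^'m \<Rightarrow> real^'m"
    and H :: "real^'m \<Rightarrow> real^'m \<Rightarrow> real^'m" and \<kappa> :: real
  assumes card_ge_2: "CARD('m) \<ge> 2"
    and u_deriv: "\<And>x. x \<in> cbox 0 1 \<Longrightarrow> (u has_derivative (\<lambda>v. G x \<bullet> v)) (at x within cbox 0 1)"
    and G_deriv: "\<And>x. x \<in> cbox 0 1 \<Longrightarrow> (G has_derivative H x) (at x within cbox 0 1)"
    and H_bound: "\<And>x. x \<in> cbox 0 1 \<Longrightarrow> onorm (H x) \<le> 1"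
    and G_bound: "\<And>x. x \<in> cbox 0 1 \<Longrightarrow> norm (G x) \<le> 1"
    and H_cont: "continuous_on (cbox 0 1 \<times> sphere 0 1) (\<lambda>(x,\<xi>). H x \<xi> \<bullet> \<xi>)"
    and nondeg: "\<And>x \<xi>. x \<in> cbox 0 1 \<Longrightarrow> norm \<xi> = 1 \<Longrightarrow> \<kappa> \<le> \<bar>u x\<bar> + norm (G x) + \<bar>H x \<xi> \<bullet> \<xi>\<bar>"
    and kappa_pos: "0 < \<kappa>" and kappa_le_1: "\<kappa> \<le> 1"
begin

lemma nondegenerate_neg: "nondegenerate (\<lambda>x. - u x) (\<lambda>x. - G x) (\<lambda>x v. - H x v) \<kappa>"
proof
  fix x :: "real^'m" assume x: "x \<in> cbox 0 1"
  show "((\<lambda>x. - u x) has_derivative (\<lambda>v. - G x \<bullet> v)) (at x within cbox 0 1)"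
    using has_derivative_minus[OF u_deriv[OF x]] by simp
  show "((\<lambda>x. - G x) has_derivative (\<lambda>v. - H x v)) (at x within cbox 0 1)"
    using has_derivative_minus[OF G_deriv[OF x]] by simp
  show "onorm (\<lambda>v. - H x v) \<le> 1" using H_bound[OF x] by (simp add: onorm_neg)
  show "norm (- G x) \<le> 1" using G_bound[OF x] by simp
  fix \<xi> :: "real^'m" assume "norm \<xi> = 1"
  then show "\<kappa> \<le> \<bar>- u x\<bar> + norm (- G x) + \<bar>- H x \<xi> \<bullet> \<xi>\<bar>" using nondeg[OF x] by simp
next
  show "continuous_on (cbox 0 1 \<times> sphere 0 1) (\<lambda>(x, \<xi>). - H x \<xi> \<bullet> \<xi>)"
    using continuous_on_minus[OF H_cont] by (simp add: case_prod_unfold)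
qed (use card_ge_2 kappa_pos kappa_le_1 in auto)

lemma continuous_on_u: "continuous_on (cbox 0 1) u"
  by (rule has_derivative_continuous_on) (use u_deriv in blast)

lemma continuous_on_G: "continuous_on (cbox 0 1) G"
  by (rule has_derivative_continuous_on) (use G_deriv in blast)

lemma G_lipschitz:
  assumes "convex C" "C \<subseteq> cbox 0 1" "x \<in> C" "y \<in> C"
  shows "norm (G y - G x) \<le> norm (y - x)"
proof -
  have "norm (G y - G x) \<le> 1 * norm (y - x)"
  proof (rule differentiable_bound[OF assms(1) _ _ assms(4,3)])
    fix z assume "z \<in> C"
    then show "(G has_derivative H z) (at z within C)"
      using G_deriv[of z] assms(2) has_derivative_subset by blast
    show "onorm (H z) \<le> 1" using H_bound \<open>z \<in> C\<close> assms(2) by blast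
  qed
  then show ?thesis by simp
qed

lemma u_lipschitz:
  assumes "convex C" "C \<subseteq> cbox 0 1" "x \<in> C" "y \<in> C" "\<And>z. z \<in> C \<Longrightarrow> norm (G z) \<le> g"
  shows "\<bar>u y - u x\<bar> \<le> g * norm (y - x)"
proof -
  have "\<exists>\<tau>\<in>{0..1}. u y - u x = G (x + \<tau> *\<^sub>R (y - x)) \<bullet> (y - x)"
  proof (rule mvt_segment[OF assms(1,3,4)])
    fix z assume "z \<in> C"
    then show "(u has_derivative (\<lambda>v. G z \<bullet> v)) (at z within C)"
      using u_deriv[of z] assms(2) has_derivative_subset by blast
  qed
  then obtain \<tau> where \<tau>: "\<tau> \<in> {0..1}" and eq: "u y - u x = G (x + \<tau> *\<^sub>R (y - x)) \<bullet> (y - x)"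
    by blast
  have "\<bar>u y - u x\<bar> \<le> norm (G (x + \<tau> *\<^sub>R (y - x))) * norm (y - x)"
    unfolding eq by (rule Cauchy_Schwarz_ineq2)
  also have "\<dots> \<le> g * norm (y - x)"
    using assms(5)[OF convex_segment_point[OF assms(1,3,4) \<tau>]] by (simp add: mult_right_mono)
  finally show ?thesis .
qed

lemma compact_sublevel:
  assumes "compact C" "C \<subseteq> cbox 0 1"
  shows "compact {y\<in>C. \<bar>u y\<bar> \<le> s \<and> c \<le> norm (G y)}"
proof -
  have "continuous_on C (\<lambda>y. \<bar>u y\<bar>)" "continuous_on C (\<lambda>y. norm (G y))"
    using continuous_on_subset[OF continuous_on_u assms(2)]
      continuous_on_subset[OF continuous_on_G assms(2)]
    by (auto intro: continuous_intros)
  then have cl: "closed (C \<inter> (\<lambda>y. \<bar>u y\<bar>) -` {..s})" "closed (C \<inter> (\<lambda>y. norm (G y)) -` {c..})"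
    using compact_imp_closed[OF assms(1)] by (auto intro!: continuous_closed_preimage)
  have "compact (C \<inter> ((C \<inter> (\<lambda>y. \<bar>u y\<bar>) -` {..s}) \<inter> (C \<inter> (\<lambda>y. norm (G y)) -` {c..})))"
    using closed_Int[OF cl] by (rule compact_Int_closed[OF assms(1)])
  moreover have "C \<inter> ((C \<inter> (\<lambda>y. \<bar>u y\<bar>) -` {..s}) \<inter> (C \<inter> (\<lambda>y. norm (G y)) -` {c..}))
      = {y\<in>C. \<bar>u y\<bar> \<le> s \<and> c \<le> norm (G y)}"
    by auto
  ultimately show ?thesis by simp
qed

lemma lmeasurable_sublevel:
  assumes "compact C" "C \<subseteq> cbox 0 1"
  shows "{y\<in>C. \<bar>u y\<bar> \<le> s} \<in> lmeasurable"
  using compact_sublevel[OF assms, of s 0] by (simp add: lmeasurable_compact)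

lemma sublevel_measure_steep:
  assumes C: "convex C" "compact C" "C \<subseteq> cbox 0 1"
    and box: "C \<subseteq> cbox a b" "\<And>j. b$j - a$j = \<tau>" "0 \<le> \<tau>"
    and steep: "0 < c" "\<And>y. y \<in> C \<Longrightarrow> c \<le> \<bar>G y $ i\<bar>" and "0 < s"
  shows "measure lebesgue {y\<in>C. \<bar>u y\<bar> \<le> s} \<le> 6 * s / c * \<tau> ^ (CARD('m) - 1)"
proof -
  have "measure lebesgue {y\<in>C. \<bar>u y\<bar> \<le> s} \<le> 3 * (2 * s / c) * \<tau> ^ (CARD('m) - 1)"
  proof (rule measure_le_of_short_fibres[OF _ _ box(2,3)])
    show "{y\<in>C. \<bar>u y\<bar> \<le> s} \<in> sets lebesgue" using lmeasurable_sublevel[OF C(2,3)] by blast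
    show "{y\<in>C. \<bar>u y\<bar> \<le> s} \<subseteq> cbox a b" using box(1) by blast
    show "0 < 2 * s / c" using steep \<open>0 < s\<close> by simp
    fix x t assume x: "x \<in> {y\<in>C. \<bar>u y\<bar> \<le> s}" and xt: "x + t *\<^sub>R axis i 1 \<in> {y\<in>C. \<bar>u y\<bar> \<le> s}"
    have "\<exists>\<theta>\<in>{0..1}. u (x + t *\<^sub>R axis i 1) - u x
        = G (x + \<theta> *\<^sub>R ((x + t *\<^sub>R axis i 1) - x)) \<bullet> ((x + t *\<^sub>R axis i 1) - x)"
    proof (rule mvt_segment[OF C(1)])
      show "x \<in> C" "x + t *\<^sub>R axis i 1 \<in> C" using x xt by auto
      fix z assume "z \<in> C"
      then show "(u has_derivative (\<lambda>v. G z \<bullet> v)) (at z within C)"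
        using u_deriv[of z] C(3) has_derivative_subset by blast
    qed
    then obtain \<theta> where \<theta>: "\<theta> \<in> {0..1}"
      and eq: "u (x + t *\<^sub>R axis i 1) - u x = G (x + \<theta> *\<^sub>R (t *\<^sub>R axis i 1)) \<bullet> (t *\<^sub>R axis i 1)"
      by auto
    have "x + \<theta> *\<^sub>R ((x + t *\<^sub>R axis i 1) - x) \<in> C"
      using convex_segment_point[OF C(1) _ _ \<theta>] x xt by blast
    then have "\<bar>t\<bar> * c \<le> \<bar>t\<bar> * \<bar>G (x + \<theta> *\<^sub>R (t *\<^sub>R axis i 1)) $ i\<bar>"
      using steep(2) by (simp add: mult_left_mono)
    also have "\<dots> = \<bar>u (x + t *\<^sub>R axis i 1) - u x\<bar>"
      unfolding eq by (simp add: cart_eq_inner_axis abs_mult)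
    also have "\<dots> \<le> 2 * s" using x xt by auto
    finally show "\<bar>t\<bar> \<le> 2 * s / c" using steep by (simp add: field_simps)
  qed
  then show ?thesis by simp
qed

lemma sublevel_measure_near_steep_point:
  assumes C: "convex C" "compact C" "C \<subseteq> cbox 0 1" "C \<subseteq> cube p \<tau>" "0 \<le> \<tau>"
    and y1: "y1 \<in> C" "0 < g" "g \<le> norm (G y1)" and small: "2 * real CARD('m)^2 * \<tau> \<le> g"
    and "0 < s"
  shows "measure lebesgue {y\<in>C. \<bar>u y\<bar> \<le> s} \<le> 6 * s"
proof -
  define m where "m = real CARD('m)"
  have m: "2 \<le> m" unfolding m_def using card_ge_2 by simp
  obtain i where i: "norm (G y1) \<le> m * \<bar>G y1 $ i\<bar>" unfolding m_def by (rule exists_coordinate_large)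
  have steep: "g / (2 * m) \<le> \<bar>G y $ i\<bar>" if "y \<in> C" for y
  proof -
    have "\<bar>(G y - G y1) $ i\<bar> \<le> norm (G y - G y1)" by (rule component_le_norm_cart)
    also have "\<dots> \<le> norm (y - y1)" by (rule G_lipschitz[OF C(1,3) y1(1) that])
    also have "\<dots> \<le> m * \<tau>" unfolding m_def using C(4) y1(1) that by (intro norm_diff_le_cube) auto
    also have "\<dots> \<le> g / (2 * m)" using small m by (simp add: field_simps power2_eq_square m_def)
    finally have "\<bar>G y1 $ i - G y $ i\<bar> \<le> g / (2 * m)" by (simp add: abs_minus_commute)
    moreover have "g / m \<le> \<bar>G y1 $ i\<bar>" using i y1(3) m by (simp add: field_simps)
    ultimately show ?thesis by (simp add: field_simps)
  qed
  have "4 \<le> m\<^sup>2" using power_mono[OF m, of 2] by simp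
  then have "1 * \<tau> \<le> (2 * m\<^sup>2) * \<tau>" using C(5) by (intro mult_right_mono) auto
  moreover have "g \<le> 1" using y1 G_bound C(3) by force
  ultimately have "\<tau> \<le> 1" using small unfolding m_def by linarith
  then have "\<tau> ^ (CARD('m) - 1) \<le> \<tau>"
    using power_decreasing[of 1 "CARD('m) - 1" \<tau>] card_ge_2 C(5) by simp
  have "measure lebesgue {y\<in>C. \<bar>u y\<bar> \<le> s} \<le> 6 * s / (g / (2 * m)) * \<tau> ^ (CARD('m) - 1)"
    using C(4) steep y1(2) m \<open>0 < s\<close> C(5)
    by (intro sublevel_measure_steep[OF C(1-3)]) (auto simp: cube_def)
  also have "\<dots> \<le> 6 * s / (g / (2 * m)) * (g / (2 * m\<^sup>2))"
  proof (rule mult_left_mono)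
    have "\<tau> \<le> g / (2 * m\<^sup>2)" using small m by (simp add: field_simps m_def)
    then show "\<tau> ^ (CARD('m) - 1) \<le> g / (2 * m\<^sup>2)" using \<open>\<tau> ^ (CARD('m) - 1) \<le> \<tau>\<close> by linarith
  qed (use y1(2) m \<open>0 < s\<close> in simp)
  also have "\<dots> = 6 * s / m" using y1(2) m by (simp add: field_simps power2_eq_square)
  also have "\<dots> \<le> 6 * s" using m \<open>0 < s\<close> by (simp add: field_simps)
  finally show ?thesis .
qed

lemma dist_argmin_le_norm_grad:
  assumes Q: "convex Q" "Q \<subseteq> cbox 0 1" and xs: "xs \<in> Q" "\<And>y. y \<in> Q \<Longrightarrow> u xs \<le> u y"
    and \<beta>: "0 < \<beta>" "\<And>y \<xi>. y \<in> Q \<Longrightarrow> norm \<xi> = 1 \<Longrightarrow> \<beta> \<le> H y \<xi> \<bullet> \<xi>" and y: "y \<in> Q"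
  shows "norm (y - xs) \<le> 2 * norm (G y) / \<beta>"
proof -
  define d where "d = y - xs"
  have u_deriv_Q: "(u has_derivative (\<lambda>v. G z \<bullet> v)) (at z within Q)" if "z \<in> Q" for z
    using u_deriv[of z] Q(2) that has_derivative_subset by blast
  have G_deriv_Q: "((\<lambda>z. G z \<bullet> d) has_derivative (\<lambda>v. H z v \<bullet> d)) (at z within Q)" if "z \<in> Q" for z
    using G_deriv[of z] Q(2) that has_derivative_subset has_derivative_inner_left by blast
  have pQ: "xs + (1/2) *\<^sub>R d \<in> Q" unfolding d_def by (rule convex_segment_point[OF Q(1) xs(1) y]) auto
  obtain \<tau>1 where \<tau>1: "\<tau>1 \<in> {0..1}"
    and e1: "u (xs + (1/2) *\<^sub>R d) - u xs = G (xs + (\<tau>1/2) *\<^sub>R d) \<bullet> ((1/2) *\<^sub>R d)"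
    using mvt_segment[OF Q(1) xs(1) pQ u_deriv_Q] by auto
  define z1 where "z1 = xs + (\<tau>1/2) *\<^sub>R d"
  have z1Q: "z1 \<in> Q"
    using convex_segment_point[OF Q(1) xs(1) pQ \<tau>1] unfolding z1_def by (simp add: algebra_simps)
  have "0 \<le> G z1 \<bullet> d" \<comment> \<open>\<open>u\<close> does not decrease from its minimum towards \<open>y\<close>\<close>
    using e1 xs(2)[OF pQ] unfolding z1_def by simp
  obtain \<tau>2 where \<tau>2: "\<tau>2 \<in> {0..1}"
    and e2: "G y \<bullet> d - G z1 \<bullet> d = H (z1 + \<tau>2 *\<^sub>R (y - z1)) (y - z1) \<bullet> d"
    using mvt_segment[OF Q(1) z1Q y G_deriv_Q] by blast
  define z2 where "z2 = z1 + \<tau>2 *\<^sub>R (y - z1)"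
  have z2Q: "z2 \<in> Q" unfolding z2_def by (rule convex_segment_point[OF Q(1) z1Q y \<tau>2])
  have lin: "bounded_linear (H z2)"
    using G_deriv[of z2] Q(2) z2Q has_derivative_bounded_linear by blast
  have "y - z1 = (1 - \<tau>1/2) *\<^sub>R d" unfolding z1_def d_def by (simp add: algebra_simps)
  then have "H z2 (y - z1) \<bullet> d = (1 - \<tau>1/2) * (H z2 d \<bullet> d)" using lin by (simp add: linear_simps)
  moreover have "\<beta> * (norm d)\<^sup>2 \<le> H z2 d \<bullet> d"
    by (rule quadratic_form_lower_bound[OF lin]) (use \<beta>(2) z2Q in blast)
  moreover have "1/2 \<le> 1 - \<tau>1/2" using \<tau>1 by auto
  moreover have "0 \<le> \<beta> * (norm d)\<^sup>2" using \<beta>(1) by simp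
  ultimately have "(1/2) * (\<beta> * (norm d)\<^sup>2) \<le> H z2 (y - z1) \<bullet> d"
    using mult_mono[of "1/2" "1 - \<tau>1/2" "\<beta> * (norm d)\<^sup>2" "H z2 d \<bullet> d"] by simp
  then have "(1/2) * (\<beta> * (norm d)\<^sup>2) \<le> G y \<bullet> d" using e2 \<open>0 \<le> G z1 \<bullet> d\<close> unfolding z2_def by linarith
  also have "\<dots> \<le> norm (G y) * norm d" by (rule Cauchy_Schwarz_ineq2[THEN order_trans[OF abs_ge_self]])
  finally have "(\<beta> / 2 * norm d) * norm d \<le> norm (G y) * norm d"
    by (simp add: power2_eq_square algebra_simps)
  then have "\<beta> / 2 * norm d \<le> norm (G y)" if "d \<noteq> 0" using that by simp
  then have "norm d \<le> 2 * norm (G y) / \<beta>" using \<beta>(1)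
    by (cases "d = 0") (auto simp: field_simps)
  then show ?thesis unfolding d_def .
qed

lemma sublevel_measure_steep_region:
  assumes Q: "convex Q" "compact Q" "Q \<subseteq> cbox 0 1"
    and "0 < \<gamma>" "1 \<le> n" "0 < L" and fine: "4 * real CARD('m)^2 * L \<le> real n * \<gamma>" and "0 < s"
  shows "measure lebesgue {y\<in>Q \<inter> cube a L. \<bar>u y\<bar> \<le> s \<and> \<gamma>/2 \<le> norm (G y)}
    \<le> real n ^ CARD('m) * (6 * s)"
proof -
  define R where "R = {y\<in>Q \<inter> cube a L. \<bar>u y\<bar> \<le> s \<and> \<gamma>/2 \<le> norm (G y)}"
  have QL: "convex (Q \<inter> cube a L)" "compact (Q \<inter> cube a L)" "Q \<inter> cube a L \<subseteq> cbox 0 1"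
    using Q convex_Int[OF Q(1) convex_cube]
      compact_Int_closed[OF Q(2) compact_imp_closed[OF compact_cube]]
    by auto
  have R: "R \<in> lmeasurable"
    unfolding R_def by (rule lmeasurable_compact[OF compact_sublevel[OF QL(2,3)]])
  show ?thesis unfolding R_def[symmetric]
  proof (rule measure_le_grid[OF _ _ \<open>1 \<le> n\<close> \<open>0 < L\<close>])
    show "R \<in> sets lebesgue" "R \<subseteq> cube a L" using R unfolding R_def by auto
    fix k :: "'m \<Rightarrow> nat"
    show "measure lebesgue (R \<inter> grid_cell a L n k) \<le> 6 * s"
    proof (cases "R \<inter> grid_cell a L n k = {}")
      case True
      then show ?thesis using \<open>0 < s\<close> by simp
    next
      case False
      then obtain y1 where y1: "y1 \<in> R \<inter> grid_cell a L n k" by blast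
      define C where "C = Q \<inter> cube a L \<inter> grid_cell a L n k"
      have C: "convex C" "compact C" "C \<subseteq> cbox 0 1" "C \<subseteq> cube (\<chi> j. a$j + L / n * k j) (L / n)"
        unfolding C_def grid_cell_def
        using QL convex_Int[OF QL(1) convex_cube]
          compact_Int_closed[OF QL(2) compact_imp_closed[OF compact_cube]]
        by auto
      have "measure lebesgue (R \<inter> grid_cell a L n k) \<le> measure lebesgue {y\<in>C. \<bar>u y\<bar> \<le> s}"
        using R lmeasurable_sublevel[OF C(2,3)]
        by (intro measure_mono_fmeasurable) (auto simp: R_def C_def grid_cell_def cube_def)
      also have "\<dots> \<le> 6 * s"
      proof (rule sublevel_measure_near_steep_point[OF C _ _ _ _ _ \<open>0 < s\<close>])
        show "2 * real CARD('m)^2 * (L / n) \<le> \<gamma> / 2"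
          using fine \<open>1 \<le> n\<close> by (simp add: field_simps)
      qed (use y1 \<open>0 < \<gamma>\<close> \<open>0 < L\<close> in \<open>auto simp: R_def C_def\<close>)
      finally show ?thesis .
    qed
  qed
qed

lemma sublevel_subset_dyadic_cover:
  assumes Q: "convex Q" "Q \<subseteq> cbox 0 1" and xs: "xs \<in> Q" "\<And>y. y \<in> Q \<Longrightarrow> u xs \<le> u y"
    and \<beta>: "0 < \<beta>" "\<And>y \<xi>. y \<in> Q \<Longrightarrow> norm \<xi> = 1 \<Longrightarrow> \<beta> \<le> H y \<xi> \<bullet> \<xi>" and s: "0 < s" "s \<le> 1"
  shows "{y\<in>Q. \<bar>u y\<bar> \<le> s} \<subseteq> Q \<inter> cube (\<chi> i. xs$i - 2 * s / \<beta>) (2 * (2 * s / \<beta>)) \<union>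
    (\<Union>j\<in>{1..nat \<lceil>log 2 (1 / s)\<rceil>}.
      {y\<in>Q \<inter> cube (\<chi> i. xs$i - 2^j * (2 * s / \<beta>)) (2 * (2^j * (2 * s / \<beta>))).
        \<bar>u y\<bar> \<le> s \<and> 2^j * s / 2 \<le> norm (G y)})"
    (is "_ \<subseteq> ?cover")
proof
  fix y assume y: "y \<in> {y\<in>Q. \<bar>u y\<bar> \<le> s}"
  then have yQ: "y \<in> Q" by simp
  have dist: "norm (y - xs) \<le> 2 * norm (G y) / \<beta>"
    by (rule dist_argmin_le_norm_grad[OF Q xs \<beta> yQ])
  show "y \<in> ?cover"
  proof (cases "norm (G y) \<le> s")
    case True
    then have "norm (y - xs) \<le> 2 * s / \<beta>"
      using dist divide_right_mono[of "2 * norm (G y)" "2 * s" \<beta>] \<beta>(1) by linarith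
    then show ?thesis using yQ mem_cube_around by blast
  next
    case False
    have "1 / s \<le> 2 ^ nat \<lceil>log 2 (1 / s)\<rceil>" using le_two_power_nat_ceiling_log s by simp
    then have "norm (G y) \<le> 2 ^ nat \<lceil>log 2 (1 / s)\<rceil> * s"
      using G_bound[of y] Q(2) yQ s by (auto simp: field_simps)
    moreover have "s < norm (G y)" using False by simp
    ultimately obtain j where j: "1 \<le> j" "j \<le> nat \<lceil>log 2 (1 / s)\<rceil>"
      "2^j * s < 2 * norm (G y)" "norm (G y) \<le> 2^j * s"
      using dyadic_scale[OF s(1)] by blast
    have "2 * norm (G y) / \<beta> \<le> 2 * (2^j * s) / \<beta>"
      using j(4) \<beta>(1) by (intro divide_right_mono) auto
    also have "\<dots> = 2^j * (2 * s / \<beta>)" by simp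
    finally have "norm (y - xs) \<le> 2^j * (2 * s / \<beta>)" using dist by linarith
    then have "y \<in> cube (\<chi> i. xs$i - 2^j * (2 * s / \<beta>)) (2 * (2^j * (2 * s / \<beta>)))"
      by (rule mem_cube_around)
    then show ?thesis using y j by auto
  qed
qed

lemma power_plus_count_le_log:
  assumes s: "0 < s" "s \<le> 1" and "1 \<le> m" "0 \<le> a" "0 \<le> b"
  shows "(a * s) ^ m + real (nat \<lceil>log 2 (1 / s)\<rceil>) * (b * s) \<le> (a ^ m + b) * s * (1 + log 2 (1 / s))"
proof -
  have "0 \<le> log 2 (1 / s)" using s by simp
  have "(a * s) ^ m = a ^ m * s ^ m" by (rule power_mult_distrib)
  also have "\<dots> \<le> a ^ m * s" using assms power_decreasing[of 1 m s] by (intro mult_left_mono) auto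
  also have "\<dots> \<le> a ^ m * s * (1 + log 2 (1 / s))"
    using mult_left_mono[of 1 "1 + log 2 (1 / s)" "a ^ m * s"] \<open>0 \<le> log 2 (1 / s)\<close> assms by simp
  finally have "(a * s) ^ m \<le> a ^ m * s * (1 + log 2 (1 / s))" .
  moreover have "real (nat \<lceil>log 2 (1 / s)\<rceil>) * (b * s) \<le> (1 + log 2 (1 / s)) * (b * s)"
    using \<open>0 \<le> log 2 (1 / s)\<close> assms by (intro mult_right_mono) (auto, linarith)
  ultimately show ?thesis by (simp add: algebra_simps)
qed

lemma sublevel_measure_definite:
  assumes Q: "convex Q" "compact Q" "Q \<subseteq> cbox 0 1" "Q \<noteq> {}"
    and \<beta>: "0 < \<beta>" "\<And>y \<xi>. y \<in> Q \<Longrightarrow> norm \<xi> = 1 \<Longrightarrow> \<beta> \<le> H y \<xi> \<bullet> \<xi>" and s: "0 < s" "s \<le> 1"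
  shows "measure lebesgue {y\<in>Q. \<bar>u y\<bar> \<le> s}
    \<le> ((4 / \<beta>) ^ CARD('m) + 6 * real (nat \<lceil>16 * real CARD('m)^2 / \<beta>\<rceil>) ^ CARD('m))
        * s * (1 + log 2 (1 / s))"
proof -
  define n where "n = nat \<lceil>16 * real CARD('m)^2 / \<beta>\<rceil>"
  define J where "J = nat \<lceil>log 2 (1 / s)\<rceil>"
  define L where "L = 1 + log 2 (1 / s)"
  obtain xs where xs: "xs \<in> Q" "\<And>y. y \<in> Q \<Longrightarrow> u xs \<le> u y"
    using continuous_attains_inf[OF Q(2,4) continuous_on_subset[OF continuous_on_u Q(3)]] by blast
  define B where "B = Q \<inter> cube (\<chi> i. xs$i - 2 * s / \<beta>) (2 * (2 * s / \<beta>))"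
  define R where "R j = {y\<in>Q \<inter> cube (\<chi> i. xs$i - 2^j * (2 * s / \<beta>)) (2 * (2^j * (2 * s / \<beta>))).
    \<bar>u y\<bar> \<le> s \<and> 2^j * s / 2 \<le> norm (G y)}" for j :: nat
  have n1: "16 * real CARD('m)^2 / \<beta> \<le> real n" unfolding n_def by linarith
  moreover have "0 < 16 * real CARD('m)^2 / \<beta>" using \<beta>(1) by simp
  ultimately have n: "16 * real CARD('m)^2 / \<beta> \<le> real n" "1 \<le> n" by simp_all
  have B: "B \<in> lmeasurable" "B \<subseteq> cbox 0 1"
    unfolding B_def using Q(3) lmeasurable_compact[OF compact_Int_closed[OF Q(2)
        compact_imp_closed[OF compact_cube]]] by auto
  have R: "R j \<in> lmeasurable" "R j \<subseteq> cbox 0 1" for j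
  proof -
    have "compact (Q \<inter> cube (\<chi> i. xs$i - 2^j * (2 * s / \<beta>)) (2 * (2^j * (2 * s / \<beta>))))"
      by (rule compact_Int_closed[OF Q(2) compact_imp_closed[OF compact_cube]])
    then show "R j \<in> lmeasurable" unfolding R_def using Q(3)
      by (intro lmeasurable_compact compact_sublevel) auto
    show "R j \<subseteq> cbox 0 1" unfolding R_def using Q(3) by auto
  qed
  have R_le: "measure lebesgue (R j) \<le> real n ^ CARD('m) * (6 * s)" for j
    unfolding R_def
  proof (rule sublevel_measure_steep_region[OF Q(1-3) _ n(2) _ _ s(1)])
    have "4 * real CARD('m)^2 * (2 * (2^j * (2 * s / \<beta>))) = 16 * real CARD('m)^2 / \<beta> * (2^j * s)"
      by (simp add: field_simps)
    also have "\<dots> \<le> real n * (2^j * s)" using n(1) s(1) by (intro mult_right_mono) auto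
    finally show "4 * real CARD('m)^2 * (2 * (2^j * (2 * s / \<beta>))) \<le> real n * (2^j * s)" .
  qed (use s(1) \<beta>(1) in auto)
  have "{y\<in>Q. \<bar>u y\<bar> \<le> s} \<subseteq> B \<union> (\<Union>j\<in>{1..J}. R j)"
    unfolding B_def R_def J_def by (rule sublevel_subset_dyadic_cover[OF Q(1,3) xs \<beta> s])
  moreover have "B \<union> (\<Union>j\<in>{1..J}. R j) \<in> lmeasurable"
    using B R by (intro fmeasurableI2[OF lmeasurable_cbox[of "0::real^'m" 1]]) auto
  ultimately have "measure lebesgue {y\<in>Q. \<bar>u y\<bar> \<le> s} \<le> measure lebesgue (B \<union> (\<Union>j\<in>{1..J}. R j))"
    using lmeasurable_sublevel[OF Q(2,3)] by (intro measure_mono_fmeasurable) auto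
  also have "\<dots> \<le> measure lebesgue B + measure lebesgue (\<Union>j\<in>{1..J}. R j)"
    using B R by (intro measure_Un_le) auto
  also have "\<dots> \<le> measure lebesgue B + (\<Sum>j\<in>{1..J}. measure lebesgue (R j))"
    using R by (intro add_left_mono measure_UNION_le) auto
  also have "\<dots> \<le> (4 * s / \<beta>) ^ CARD('m) + real J * (real n ^ CARD('m) * (6 * s))"
  proof (rule add_mono)
    have "measure lebesgue B \<le> measure lebesgue (cube (\<chi> i. xs$i - 2 * s / \<beta>) (2 * (2 * s / \<beta>)))"
      using B by (intro measure_mono_fmeasurable) (auto simp: B_def lmeasurable_cube)
    then show "measure lebesgue B \<le> (4 * s / \<beta>) ^ CARD('m)"
      using s \<beta> by (simp add: measure_cube)
    show "(\<Sum>j\<in>{1..J}. measure lebesgue (R j)) \<le> real J * (real n ^ CARD('m) * (6 * s))"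
      using sum_mono[of "{1..J}", OF R_le] by simp
  qed
  also have "\<dots> \<le> ((4 / \<beta>) ^ CARD('m) + 6 * real n ^ CARD('m)) * s * L"
    unfolding J_def L_def using power_plus_count_le_log[OF s, of "CARD('m)" "4 / \<beta>" "6 * real n ^ CARD('m)"]
      \<beta>(1) by (simp add: algebra_simps)
  finally show ?thesis unfolding n_def L_def .
qed

lemma sublevel_measure_definite_either:
  assumes Q: "convex Q" "compact Q" "Q \<subseteq> cbox 0 1" "Q \<noteq> {}" and "0 < \<beta>"
    and sign: "(\<forall>y\<in>Q. \<forall>\<xi>. norm \<xi> = 1 \<longrightarrow> \<beta> \<le> H y \<xi> \<bullet> \<xi>) \<or> (\<forall>y\<in>Q. \<forall>\<xi>. norm \<xi> = 1 \<longrightarrow> \<beta> \<le> - (H y \<xi> \<bullet> \<xi>))"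
    and s: "0 < s" "s \<le> 1"
  shows "measure lebesgue {y\<in>Q. \<bar>u y\<bar> \<le> s}
    \<le> ((4 / \<beta>) ^ CARD('m) + 6 * real (nat \<lceil>16 * real CARD('m)^2 / \<beta>\<rceil>) ^ CARD('m))
        * s * (1 + log 2 (1 / s))"
  using sign
proof
  assume "\<forall>y\<in>Q. \<forall>\<xi>. norm \<xi> = 1 \<longrightarrow> \<beta> \<le> H y \<xi> \<bullet> \<xi>"
  then show ?thesis using sublevel_measure_definite[OF Q \<open>0 < \<beta>\<close> _ s] by blast
next
  interpret neg: nondegenerate "\<lambda>x. - u x" "\<lambda>x. - G x" "\<lambda>x v. - H x v" \<kappa>
    by (rule nondegenerate_neg)
  assume "\<forall>y\<in>Q. \<forall>\<xi>. norm \<xi> = 1 \<longrightarrow> \<beta> \<le> - (H y \<xi> \<bullet> \<xi>)"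
  then show ?thesis using neg.sublevel_measure_definite[OF Q \<open>0 < \<beta>\<close> _ s] by simp
qed

text \<open>Where the gradient is small, \<open>u\<close> is nearly constant; if it is also small somewhere,
  nondegeneracy forces the Hessian to be definite.\<close>

lemma sublevel_measure_flat:
  assumes Q: "convex Q" "compact Q" "Q \<subseteq> cbox 0 1"
    and diam: "\<And>x y. x \<in> Q \<Longrightarrow> y \<in> Q \<Longrightarrow> norm (y - x) \<le> 1"
    and flat: "\<And>y. y \<in> Q \<Longrightarrow> norm (G y) \<le> \<kappa> / 4" and s: "0 < s" "s \<le> \<kappa> / 4"
  shows "measure lebesgue {y\<in>Q. \<bar>u y\<bar> \<le> s}
    \<le> ((16 / \<kappa>) ^ CARD('m) + 6 * real (nat \<lceil>64 * real CARD('m)^2 / \<kappa>\<rceil>) ^ CARD('m))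
        * s * (1 + log 2 (1 / s))"
proof (cases "{y\<in>Q. \<bar>u y\<bar> \<le> s} = {}")
  case True
  have "0 \<le> (16 / \<kappa>) ^ CARD('m) + 6 * real (nat \<lceil>64 * real CARD('m)^2 / \<kappa>\<rceil>) ^ CARD('m)"
    using kappa_pos by (intro add_nonneg_nonneg mult_nonneg_nonneg zero_le_power of_nat_0_le_iff) auto
  moreover have "0 \<le> 1 + log 2 (1 / s)" using s kappa_le_1 by simp
  ultimately show ?thesis
    unfolding True using s by (simp only: measure_empty) (intro mult_nonneg_nonneg, auto)
next
  case False
  then obtain x0 where x0: "x0 \<in> Q" "\<bar>u x0\<bar> \<le> s" by blast
  have "\<bar>u y\<bar> \<le> \<kappa> / 2" if "y \<in> Q" for y
  proof -
    have "\<bar>u y - u x0\<bar> \<le> \<kappa> / 4 * norm (y - x0)" by (rule u_lipschitz[OF Q(1,3) x0(1) that flat])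
    also have "\<dots> \<le> \<kappa> / 4" using diam[OF x0(1) that] kappa_pos by (simp add: mult_left_le)
    finally show ?thesis using x0(2) s by linarith
  qed
  then have "\<kappa> / 4 \<le> \<bar>H y \<xi> \<bullet> \<xi>\<bar>" if "y \<in> Q" "norm \<xi> = 1" for y \<xi>
    using nondeg[of y \<xi>] flat[of y] that Q(3) by fastforce
  then have "(\<forall>p\<in>Q \<times> sphere 0 1. \<kappa> / 4 \<le> H (fst p) (snd p) \<bullet> snd p) \<or>
      (\<forall>p\<in>Q \<times> sphere 0 1. \<kappa> / 4 \<le> - (H (fst p) (snd p) \<bullet> snd p))"
  proof (intro sign_definite_of_abs_ge)
    show "connected (Q \<times> sphere (0::real^'m) 1)"
      using card_ge_2 by (intro connected_Times convex_connected Q(1) connected_sphere) simp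
    show "continuous_on (Q \<times> sphere 0 1) (\<lambda>p. H (fst p) (snd p) \<bullet> snd p)"
    proof -
      have "Q \<times> sphere (0::real^'m) 1 \<subseteq> cbox 0 1 \<times> sphere 0 1" using Q(3) by auto
      then show ?thesis using continuous_on_subset[OF H_cont] by (simp add: case_prod_unfold)
    qed
  qed (use kappa_pos in auto)
  then have sign: "(\<forall>y\<in>Q. \<forall>\<xi>. norm \<xi> = 1 \<longrightarrow> \<kappa> / 4 \<le> H y \<xi> \<bullet> \<xi>) \<or>
      (\<forall>y\<in>Q. \<forall>\<xi>. norm \<xi> = 1 \<longrightarrow> \<kappa> / 4 \<le> - (H y \<xi> \<bullet> \<xi>))"
    by auto
  have "s \<le> 1" using s kappa_le_1 by simp
  have "measure lebesgue {y\<in>Q. \<bar>u y\<bar> \<le> s}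
    \<le> ((4 / (\<kappa> / 4)) ^ CARD('m) + 6 * real (nat \<lceil>16 * real CARD('m)^2 / (\<kappa> / 4)\<rceil>) ^ CARD('m))
        * s * (1 + log 2 (1 / s))"
    by (rule sublevel_measure_definite_either[OF Q _ _ sign s(1) \<open>s \<le> 1\<close>]) (use x0 kappa_pos in auto)
  also have "4 / (\<kappa> / 4) = 16 / \<kappa>" by simp
  also have "16 * real CARD('m)^2 / (\<kappa> / 4) = 64 * real CARD('m)^2 / \<kappa>" by simp
  finally show ?thesis .
qed

lemma sublevel_measure_small_cube:
  assumes Q: "Q \<subseteq> cbox 0 1" "Q \<subseteq> cube q \<sigma>" "convex Q" "compact Q" "0 \<le> \<sigma>"
    and small: "8 * real CARD('m)^2 * \<sigma> \<le> \<kappa>" and s: "0 < s" "s \<le> \<kappa> / 4"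
  shows "measure lebesgue {y\<in>Q. \<bar>u y\<bar> \<le> s}
    \<le> (6 + (16 / \<kappa>) ^ CARD('m) + 6 * real (nat \<lceil>64 * real CARD('m)^2 / \<kappa>\<rceil>) ^ CARD('m))
        * s * (1 + log 2 (1 / s))"
proof -
  define c where "c = (16 / \<kappa>) ^ CARD('m) + 6 * real (nat \<lceil>64 * real CARD('m)^2 / \<kappa>\<rceil>) ^ CARD('m)"
  define L where "L = 1 + log 2 (1 / s)"
  have c: "0 \<le> c" unfolding c_def
    using kappa_pos by (intro add_nonneg_nonneg mult_nonneg_nonneg zero_le_power of_nat_0_le_iff) auto
  have L: "1 \<le> L" unfolding L_def using s kappa_le_1 by simp
  have "measure lebesgue {y\<in>Q. \<bar>u y\<bar> \<le> s} \<le> max (6 * s) (c * s * L)"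
  proof (cases "\<exists>x1\<in>Q. \<kappa> / 4 \<le> norm (G x1)")
    case True
    then obtain x1 where "x1 \<in> Q" "\<kappa> / 4 \<le> norm (G x1)" by blast
    moreover have "2 * real CARD('m)^2 * \<sigma> \<le> \<kappa> / 4" using small by simp
    ultimately have "measure lebesgue {y\<in>Q. \<bar>u y\<bar> \<le> s} \<le> 6 * s"
      using kappa_pos
      by (intro sublevel_measure_near_steep_point[OF Q(3,4,1,2,5) _ _ _ _ s(1), where g = "\<kappa> / 4"])
        auto
    then show ?thesis by simp
  next
    case False
    have "real CARD('m) * \<sigma> \<le> 8 * real CARD('m)^2 * \<sigma>"
      using Q(5) card_ge_2 by (intro mult_right_mono) (auto simp: power2_eq_square)
    moreover have "norm (y - x) \<le> real CARD('m) * \<sigma>" if "x \<in> Q" "y \<in> Q" for x y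
      using that Q(2) by (intro norm_diff_le_cube) auto
    ultimately have "norm (y - x) \<le> 1" if "x \<in> Q" "y \<in> Q" for x y
      using that small kappa_le_1 by force
    then have "measure lebesgue {y\<in>Q. \<bar>u y\<bar> \<le> s} \<le> c * s * L"
      unfolding c_def L_def using False by (intro sublevel_measure_flat[OF Q(3,4,1) _ _ s]) auto
    then show ?thesis by simp
  qed
  also have "\<dots> \<le> (6 + c) * s * L"
  proof -
    have "6 * s \<le> 6 * s * L" using mult_left_mono[OF L, of "6 * s"] s by simp
    moreover have "0 \<le> c * s * L" using c s L by simp
    moreover have "(6 + c) * s * L = 6 * s * L + c * s * L" by (simp add: algebra_simps)
    ultimately show ?thesis using s by (intro max.boundedI) linarith+
  qed
  finally show ?thesis unfolding c_def L_def by (simp add: add.assoc)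
qed

end

definition sublevel_const :: "nat \<Rightarrow> real \<Rightarrow> real" where
  "sublevel_const m \<kappa> = real (nat \<lceil>8 * real m^2 / \<kappa>\<rceil>) ^ m *
     (6 + (16 / \<kappa>) ^ m + 6 * real (nat \<lceil>64 * real m^2 / \<kappa>\<rceil>) ^ m)"

lemma one_le_sublevel_const:
  assumes "1 \<le> m" "0 < \<kappa>" "\<kappa> \<le> 1" "\<kappa> / 4 < s" "s \<le> 1"
  shows "1 \<le> sublevel_const m \<kappa> * s * (1 + log 2 (1 / s))"
proof -
  define c where "c = 6 + (16 / \<kappa>) ^ m + 6 * real (nat \<lceil>64 * real m^2 / \<kappa>\<rceil>) ^ m"
  have "16 / \<kappa> \<le> (16 / \<kappa>) ^ m" using power_increasing[of 1 m "16 / \<kappa>"] assms by simp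
  moreover have "0 \<le> 6 * real (nat \<lceil>64 * real m^2 / \<kappa>\<rceil>) ^ m"
    by (intro mult_nonneg_nonneg zero_le_power of_nat_0_le_iff) simp
  moreover have "0 < 16 / \<kappa>" using assms by simp
  ultimately have "16 / \<kappa> \<le> c" "0 \<le> c" unfolding c_def by linarith+
  then have "16 / \<kappa> * (\<kappa> / 4) \<le> c * s" using assms by (intro mult_mono) auto
  then have "1 \<le> c * s" using assms by simp
  also have "\<dots> \<le> c * s * (1 + log 2 (1 / s))"
    using mult_left_mono[of 1 "1 + log 2 (1 / s)" "c * s"] \<open>0 \<le> c\<close> assms by simp
  also have "\<dots> \<le> real (nat \<lceil>8 * real m^2 / \<kappa>\<rceil>) ^ m * (c * s * (1 + log 2 (1 / s)))"
  proof -
    have "0 < 8 * real m^2 / \<kappa>" using assms by simp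
    then have "1 \<le> real (nat \<lceil>8 * real m^2 / \<kappa>\<rceil>) ^ m" by (intro one_le_power) simp
    moreover have "0 \<le> log 2 (1 / s)" using assms by simp
    then have "0 \<le> c * s * (1 + log 2 (1 / s))" using \<open>0 \<le> c\<close> assms by simp
    ultimately show ?thesis using mult_right_mono[of 1 _ "c * s * (1 + log 2 (1 / s))"] by simp
  qed
  finally show ?thesis unfolding sublevel_const_def c_def by (simp add: algebra_simps)
qed

context nondegenerate
begin

text \<open>Cut the unit cube into cubes so small that on each of them either the gradient stays
  away from zero or the function is flat.\<close>

theorem sublevel_measure:
  assumes s: "0 < s" "s \<le> 1"
  shows "measure lebesgue {x\<in>cbox 0 1. \<bar>u x\<bar> \<le> s}
    \<le> sublevel_const CARD('m) \<kappa> * s * (1 + log 2 (1 / s))"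
proof -
  define N where "N = nat \<lceil>8 * real CARD('m)^2 / \<kappa>\<rceil>"
  define c where
    "c = 6 + (16 / \<kappa>) ^ CARD('m) + 6 * real (nat \<lceil>64 * real CARD('m)^2 / \<kappa>\<rceil>) ^ CARD('m)"
  define L where "L = 1 + log 2 (1 / s)"
  define S where "S = {x\<in>cbox 0 1. \<bar>u x\<bar> \<le> s}"
  have N: "8 * real CARD('m)^2 / \<kappa> \<le> real N" unfolding N_def by linarith
  moreover have "0 < 8 * real CARD('m)^2 / \<kappa>" using kappa_pos by simp
  ultimately have "1 \<le> N" by simp
  have const: "sublevel_const CARD('m) \<kappa> = real N ^ CARD('m) * c"
    unfolding sublevel_const_def N_def c_def ..
  have S: "S \<in> lmeasurable" "S \<subseteq> cube 0 1" unfolding S_def cube_0_1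
    using lmeasurable_sublevel[of "cbox 0 1" s] by auto
  show ?thesis
  proof (cases "\<kappa> / 4 < s")
    case True
    have "measure lebesgue S \<le> 1"
      using measure_mono_fmeasurable[OF S(2) _ lmeasurable_cube] S(1) measure_cube[of 1 "0::real^'m"]
      by simp
    also have "1 \<le> sublevel_const CARD('m) \<kappa> * s * (1 + log 2 (1 / s))"
      using card_ge_2 kappa_pos kappa_le_1 True s by (intro one_le_sublevel_const) auto
    finally show ?thesis unfolding S_def .
  next
    case False
    have "measure lebesgue S \<le> real N ^ CARD('m) * (c * s * L)"
    proof (rule measure_le_grid[OF _ S(2) \<open>1 \<le> N\<close>])
      fix k :: "'m \<Rightarrow> nat" assume k: "k \<in> grid_index N"
      have cell: "grid_cell 0 1 N k \<subseteq> cbox 0 1"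
        using grid_cell_subset_cube[OF k, of 1 0] cube_0_1 by auto
      have "S \<inter> grid_cell 0 1 N k = {y\<in>grid_cell 0 1 N k. \<bar>u y\<bar> \<le> s}"
        using cell unfolding S_def by auto
      also have "measure lebesgue \<dots> \<le> c * s * L"
        unfolding c_def L_def
      proof (rule sublevel_measure_small_cube[OF cell])
        show "grid_cell 0 1 N k \<subseteq> cube (\<chi> j. 0 + 1 / N * k j) (1 / N)"
          unfolding grid_cell_def by simp
        show "8 * real CARD('m)^2 * (1 / N) \<le> \<kappa>"
          using N kappa_pos \<open>1 \<le> N\<close> by (simp add: field_simps)
      qed (use False s(1) in \<open>auto simp: grid_cell_def convex_cube compact_cube\<close>)
      finally show "measure lebesgue (S \<inter> grid_cell 0 1 N k) \<le> c * s * L" .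
    qed (use S in auto)
    then show ?thesis unfolding const S_def L_def by (simp add: algebra_simps)
  qed
qed

end

section \<open>The space of \<open>C\<^sup>2\<close> functions on the unit cube\<close>

lemma unit_cube_nonempty: "(unit_cube :: (real^'m) set) \<noteq> {}"
proof -
  have "(0::real^'m) \<in> cbox 0 1" by (simp add: mem_box_cart)
  then show ?thesis unfolding unit_cube_def by blast
qed

lemma compact_unit_cube: "compact (unit_cube :: (real^'m) set)"
  unfolding unit_cube_def by simp

lemma C2_witness_grad_hess:
  assumes "C2_on U f"
  shows "C2_witness U f (grad_on U f) (hess_on U f)"
proof -
  from assms have "\<exists>Df D2f. C2_witness U f Df D2f" unfolding C2_on_def .
  then have "\<exists>D2f. C2_witness U f (grad_on U f) D2f" unfolding grad_on_def by (rule someI_ex)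
  then show ?thesis unfolding hess_on_def by (rule someI_ex)
qed

lemma continuous_on_C2:
  assumes "C2_on U h"
  shows "continuous_on U h" "continuous_on U (grad_on U h)" "continuous_on U (hess_on U h)"
  using C2_witness_grad_hess[OF assms] unfolding C2_witness_def
  by (auto intro: has_derivative_continuous_on)

lemma C2_witness_diff:
  assumes "C2_witness U f Df D2f" "C2_witness U g Dg D2g"
  shows "C2_witness U (\<lambda>x. f x - g x) (\<lambda>x. Df x - Dg x) (\<lambda>x. D2f x - D2g x)"
  unfolding C2_witness_def
proof (intro conjI ballI)
  fix x assume x: "x \<in> U"
  have "((\<lambda>x. f x - g x) has_derivative (\<lambda>h. Df x \<bullet> h - Dg x \<bullet> h)) (at x within U)"
    using assms x unfolding C2_witness_def by (intro has_derivative_diff) auto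
  then show "((\<lambda>x. f x - g x) has_derivative (\<lambda>h. (Df x - Dg x) \<bullet> h)) (at x within U)"
    by (simp add: inner_diff_left)
  have "((\<lambda>x. Df x - Dg x) has_derivative (\<lambda>h. D2f x *v h - D2g x *v h)) (at x within U)"
    using assms x unfolding C2_witness_def by (intro has_derivative_diff) auto
  then show "((\<lambda>x. Df x - Dg x) has_derivative (\<lambda>h. (D2f x - D2g x) *v h)) (at x within U)"
    by (simp add: matrix_vector_mult_diff_rdistrib)
next
  show "continuous_on U (\<lambda>x. D2f x - D2g x)"
    using assms unfolding C2_witness_def by (intro continuous_on_diff) auto
qed

lemma C2_on_diff: "C2_on U f \<Longrightarrow> C2_on U g \<Longrightarrow> C2_on U (\<lambda>x. f x - g x)"
  unfolding C2_on_def using C2_witness_diff by blast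

text \<open>Derivatives within the closed cube are unique, so \<open>grad_on\<close> and \<open>hess_on\<close> do not depend on
  the choice made by \<open>SOME\<close>.\<close>

lemma C2_witness_unique:
  assumes w1: "C2_witness unit_cube f Df D2f" and w2: "C2_witness unit_cube f Df' D2f'"
    and x: "x \<in> (unit_cube :: (real^'m) set)"
  shows "Df x = Df' x" "D2f x = D2f' x"
proof -
  have box: "(0::real^'m) \<bullet> i < 1 \<bullet> i" if "i \<in> Basis" for i
    using that by (auto simp: Basis_vec_def inner_axis)
  have D1: "Df y = Df' y" if y: "y \<in> (unit_cube :: (real^'m) set)" for y
  proof -
    have "(\<lambda>h. Df y \<bullet> h) = (\<lambda>h. Df' y \<bullet> h)"
      using frechet_derivative_unique_within_closed_interval[OF box, of y f]
        w1 w2 y unfolding C2_witness_def unit_cube_def by blast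
    then show ?thesis by (metis vec_eq_iff cart_eq_inner_axis)
  qed
  then show "Df x = Df' x" using x .
  have "(Df has_derivative (\<lambda>h. D2f x *v h)) (at x within unit_cube)"
    using w1 x unfolding C2_witness_def by blast
  then have "(Df' has_derivative (\<lambda>h. D2f x *v h)) (at x within unit_cube)"
    by (rule has_derivative_transform_within[of _ _ _ _ 1]) (use x D1 in auto)
  moreover have "(Df' has_derivative (\<lambda>h. D2f' x *v h)) (at x within unit_cube)"
    using w2 x unfolding C2_witness_def by blast
  ultimately have "(\<lambda>h. D2f x *v h) = (\<lambda>h. D2f' x *v h)"
    using frechet_derivative_unique_within_closed_interval[OF box, of x Df']
      x unfolding unit_cube_def by blast
  then show "D2f x = D2f' x" by (simp add: matrix_eq fun_eq_iff)
qed

lemma grad_hess_on_diff: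
  assumes "C2_on unit_cube f" "C2_on unit_cube g" "x \<in> (unit_cube :: (real^'m) set)"
  shows "grad_on unit_cube (\<lambda>y. f y - g y) x = grad_on unit_cube f x - grad_on unit_cube g x"
    "hess_on unit_cube (\<lambda>y. f y - g y) x = hess_on unit_cube f x - hess_on unit_cube g x"
proof -
  note w = C2_witness_diff[OF C2_witness_grad_hess[OF assms(1)] C2_witness_grad_hess[OF assms(2)]]
  note w' = C2_witness_grad_hess[OF C2_on_diff[OF assms(1,2)]]
  show "grad_on unit_cube (\<lambda>y. f y - g y) x = grad_on unit_cube f x - grad_on unit_cube g x"
    using C2_witness_unique(1)[OF w' w assms(3)] by simp
  show "hess_on unit_cube (\<lambda>y. f y - g y) x = hess_on unit_cube f x - hess_on unit_cube g x"
    using C2_witness_unique(2)[OF w' w assms(3)] by simp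
qed

lemma bdd_above_C2:
  assumes "C2_on unit_cube (h :: real^'m \<Rightarrow> real)"
  shows "bdd_above ((\<lambda>x. \<bar>h x\<bar>) ` unit_cube)"
    "bdd_above ((\<lambda>x. norm (grad_on unit_cube h x)) ` unit_cube)"
    "bdd_above ((\<lambda>x. onorm (\<lambda>v. hess_on unit_cube h x *v v)) ` unit_cube)"
proof -
  note c = continuous_on_C2[OF assms]
  have "compact ((\<lambda>x. \<bar>h x\<bar>) ` unit_cube)" "compact ((\<lambda>x. norm (grad_on unit_cube h x)) ` unit_cube)"
    by (intro compact_continuous_image compact_unit_cube continuous_intros c)+
  then show "bdd_above ((\<lambda>x. \<bar>h x\<bar>) ` unit_cube)"
    "bdd_above ((\<lambda>x. norm (grad_on unit_cube h x)) ` unit_cube)"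
    by (auto intro: bounded_imp_bdd_above compact_imp_bounded)
  have "compact (hess_on unit_cube h ` unit_cube)"
    by (rule compact_continuous_image[OF c(3) compact_unit_cube])
  then obtain B where B: "\<And>x. x \<in> unit_cube \<Longrightarrow> norm (hess_on unit_cube h x) \<le> B"
    using compact_imp_bounded bounded_iff by (metis imageI)
  have "onorm (\<lambda>v. hess_on unit_cube h x *v v) \<le> real CARD('m) * real CARD('m) * B"
    if "x \<in> unit_cube" for x
  proof -
    have "\<bar>hess_on unit_cube h x $ i $ j\<bar> \<le> B" for i j
      using component_le_norm_cart[of "hess_on unit_cube h x $ i" j]
        Finite_Cartesian_Product.norm_nth_le[of "hess_on unit_cube h x" i] B[OF that] by linarith
    then show ?thesis by (rule onorm_le_matrix_component)
  qed
  then show "bdd_above ((\<lambda>x. onorm (\<lambda>v. hess_on unit_cube h x *v v)) ` unit_cube)"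
    by (rule bdd_aboveI2)
qed

lemma c2norm_ge:
  assumes "C2_on unit_cube (h :: real^'m \<Rightarrow> real)" "x \<in> unit_cube"
  shows "\<bar>h x\<bar> \<le> c2norm unit_cube h" "norm (grad_on unit_cube h x) \<le> c2norm unit_cube h"
    "onorm (\<lambda>v. hess_on unit_cube h x *v v) \<le> c2norm unit_cube h"
proof -
  note b = bdd_above_C2[OF assms(1)]
  have "0 \<le> (SUP y\<in>unit_cube. \<bar>h y\<bar>)" "0 \<le> (SUP y\<in>unit_cube. norm (grad_on unit_cube h y))"
    "0 \<le> (SUP y\<in>unit_cube. onorm (\<lambda>v. hess_on unit_cube h y *v v))"
    using b assms(2) by (auto intro!: cSUP_upper2 onorm_pos_le[OF matrix_vector_mul_bounded_linear])
  moreover have "\<bar>h x\<bar> \<le> (SUP y\<in>unit_cube. \<bar>h y\<bar>)"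
    "norm (grad_on unit_cube h x) \<le> (SUP y\<in>unit_cube. norm (grad_on unit_cube h y))"
    "onorm (\<lambda>v. hess_on unit_cube h x *v v)
      \<le> (SUP y\<in>unit_cube. onorm (\<lambda>v. hess_on unit_cube h y *v v))"
    using b assms(2) by (auto intro: cSUP_upper)
  ultimately show "\<bar>h x\<bar> \<le> c2norm unit_cube h" "norm (grad_on unit_cube h x) \<le> c2norm unit_cube h"
    "onorm (\<lambda>v. hess_on unit_cube h x *v v) \<le> c2norm unit_cube h"
    unfolding c2norm_def by linarith+
qed

lemma c2dist_self:
  assumes "C2_on unit_cube (f :: real^'m \<Rightarrow> real)"
  shows "c2dist unit_cube f f = 0"
proof -
  have "grad_on unit_cube (\<lambda>y. f y - f y) x = 0" "hess_on unit_cube (\<lambda>y. f y - f y) x = 0"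
    if "x \<in> unit_cube" for x
    using grad_hess_on_diff[OF assms assms that] by simp_all
  moreover have "(*v) (0::real^'m^'m) = (\<lambda>v. 0)" by (simp add: fun_eq_iff)
  ultimately show ?thesis
    unfolding c2dist_def c2norm_def using unit_cube_nonempty[where 'm = 'm] by (simp add: onorm_zero)
qed

lemma c2dist_commute:
  assumes "C2_on unit_cube f" "C2_on unit_cube (g :: real^'m \<Rightarrow> real)"
  shows "c2dist unit_cube f g = c2dist unit_cube g f"
proof -
  have "grad_on unit_cube (\<lambda>y. g y - f y) x = - grad_on unit_cube (\<lambda>y. f y - g y) x"
    "(\<lambda>v. hess_on unit_cube (\<lambda>y. g y - f y) x *v v)
      = (\<lambda>v. - (hess_on unit_cube (\<lambda>y. f y - g y) x *v v))"
    if "x \<in> unit_cube" for x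
    using grad_hess_on_diff[OF assms that] grad_hess_on_diff[OF assms(2,1) that]
    by (auto simp: fun_eq_iff matrix_vector_mult_diff_rdistrib)
  then show ?thesis unfolding c2dist_def c2norm_def
    by (intro arg_cong2[where f = "(+)"] SUP_cong refl) (auto simp: abs_minus_commute onorm_neg)
qed

lemma cSUP_add_le:
  fixes a b c :: "'a \<Rightarrow> real"
  assumes "S \<noteq> {}" "bdd_above (a ` S)" "bdd_above (b ` S)" "\<And>x. x \<in> S \<Longrightarrow> c x \<le> a x + b x"
  shows "(SUP x\<in>S. c x) \<le> (SUP x\<in>S. a x) + (SUP x\<in>S. b x)"
proof (rule cSUP_least[OF assms(1)])
  fix x assume x: "x \<in> S"
  have "a x \<le> (SUP x\<in>S. a x)" "b x \<le> (SUP x\<in>S. b x)" using cSUP_upper[OF x] assms(2,3) by auto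
  then show "c x \<le> (SUP x\<in>S. a x) + (SUP x\<in>S. b x)" using assms(4)[OF x] by linarith
qed

lemma c2dist_triangle:
  assumes f: "C2_on unit_cube f" and g: "C2_on unit_cube (g :: real^'m \<Rightarrow> real)"
    and k: "C2_on unit_cube k"
  shows "c2dist unit_cube f g \<le> c2dist unit_cube f k + c2dist unit_cube k g"
proof -
  let ?fg = "\<lambda>y. f y - g y" and ?fk = "\<lambda>y. f y - k y" and ?kg = "\<lambda>y. k y - g y"
  note b1 = bdd_above_C2[OF C2_on_diff[OF f k]] and b2 = bdd_above_C2[OF C2_on_diff[OF k g]]
  have grad: "grad_on unit_cube ?fg x = grad_on unit_cube ?fk x + grad_on unit_cube ?kg x"
    and hess: "hess_on unit_cube ?fg x *v v
      = hess_on unit_cube ?fk x *v v + hess_on unit_cube ?kg x *v v"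
    if "x \<in> unit_cube" for x v
    using that by (simp_all add: grad_hess_on_diff[OF f g] grad_hess_on_diff[OF f k]
        grad_hess_on_diff[OF k g] matrix_vector_mult_diff_rdistrib)
  have "(SUP x\<in>unit_cube. \<bar>?fg x\<bar>) \<le> (SUP x\<in>unit_cube. \<bar>?fk x\<bar>) + (SUP x\<in>unit_cube. \<bar>?kg x\<bar>)"
    by (rule cSUP_add_le[OF unit_cube_nonempty b1(1) b2(1)]) linarith
  moreover have "(SUP x\<in>unit_cube. norm (grad_on unit_cube ?fg x))
      \<le> (SUP x\<in>unit_cube. norm (grad_on unit_cube ?fk x))
        + (SUP x\<in>unit_cube. norm (grad_on unit_cube ?kg x))"
    by (rule cSUP_add_le[OF unit_cube_nonempty b1(2) b2(2)]) (simp add: grad norm_triangle_ineq)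
  moreover have "(SUP x\<in>unit_cube. onorm (\<lambda>v. hess_on unit_cube ?fg x *v v))
      \<le> (SUP x\<in>unit_cube. onorm (\<lambda>v. hess_on unit_cube ?fk x *v v))
        + (SUP x\<in>unit_cube. onorm (\<lambda>v. hess_on unit_cube ?kg x *v v))"
    by (rule cSUP_add_le[OF unit_cube_nonempty b1(3) b2(3)])
      (simp add: hess onorm_triangle[OF matrix_vector_mul_bounded_linear
          matrix_vector_mul_bounded_linear])
  ultimately show ?thesis unfolding c2dist_def c2norm_def by linarith
qed

lemma nondegenerate_C2_scaled:
  fixes h :: "real^'m \<Rightarrow> real"
  assumes "CARD('m) \<ge> 2" and h: "C2_on unit_cube h" and r: "0 < r" "c2norm unit_cube h \<le> r"
    and \<kappa>: "0 < \<kappa>" "\<kappa> \<le> 1"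
    and nondeg: "\<And>x \<xi>. x \<in> unit_cube \<Longrightarrow> norm \<xi> = 1 \<Longrightarrow>
      \<kappa> * r \<le> \<bar>h x\<bar> + norm (grad_on unit_cube h x) + \<bar>dd2 unit_cube h \<xi> x\<bar>"
  shows "nondegenerate (\<lambda>x. h x / r) (\<lambda>x. (1 / r) *\<^sub>R grad_on unit_cube h x)
    (\<lambda>x v. (1 / r) *\<^sub>R (hess_on unit_cube h x *v v)) \<kappa>"
proof
  have w: "C2_witness unit_cube h (grad_on unit_cube h) (hess_on unit_cube h)"
    by (rule C2_witness_grad_hess[OF h])
  fix x :: "real^'m" assume x: "x \<in> cbox 0 1"
  then have xU: "x \<in> unit_cube" by (simp add: unit_cube_def)
  have "(h has_derivative (\<lambda>v. grad_on unit_cube h x \<bullet> v)) (at x within cbox 0 1)"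
    using w xU unfolding C2_witness_def unit_cube_def by auto
  from has_derivative_mult_right[OF this, of "1 / r"]
  show "((\<lambda>x. h x / r) has_derivative (\<lambda>v. (1 / r) *\<^sub>R grad_on unit_cube h x \<bullet> v))
      (at x within cbox 0 1)"
    by simp
  have "(grad_on unit_cube h has_derivative (\<lambda>v. hess_on unit_cube h x *v v)) (at x within cbox 0 1)"
    using w xU unfolding C2_witness_def unit_cube_def by auto
  then show "((\<lambda>x. (1 / r) *\<^sub>R grad_on unit_cube h x) has_derivative
      (\<lambda>v. (1 / r) *\<^sub>R (hess_on unit_cube h x *v v))) (at x within cbox 0 1)"
    by (rule has_derivative_scaleR_right)
  have "onorm (\<lambda>v. (1 / r) *\<^sub>R (hess_on unit_cube h x *v v))
      = onorm (\<lambda>v. hess_on unit_cube h x *v v) / r"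
    using onorm_scaleR[OF matrix_vector_mul_bounded_linear, of "1 / r"] r by simp
  then show "onorm (\<lambda>v. (1 / r) *\<^sub>R (hess_on unit_cube h x *v v)) \<le> 1"
    using c2norm_ge(3)[OF h xU] r by simp
  show "norm ((1 / r) *\<^sub>R grad_on unit_cube h x) \<le> 1" using c2norm_ge(2)[OF h xU] r by simp
  fix \<xi> :: "real^'m" assume "norm \<xi> = 1"
  have "\<kappa> * r \<le> \<bar>h x\<bar> + norm (grad_on unit_cube h x) + \<bar>(hess_on unit_cube h x *v \<xi>) \<bullet> \<xi>\<bar>"
    using nondeg[OF xU \<open>norm \<xi> = 1\<close>] unfolding dd2_def .
  then show "\<kappa> \<le> \<bar>h x / r\<bar> + norm ((1 / r) *\<^sub>R grad_on unit_cube h x)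
      + \<bar>(1 / r) *\<^sub>R (hess_on unit_cube h x *v \<xi>) \<bullet> \<xi>\<bar>"
    using r by (simp add: abs_mult add_divide_distrib[symmetric] pos_le_divide_eq)
next
  have "continuous_on (cbox 0 1 \<times> sphere 0 1) (\<lambda>(x,\<xi>). (hess_on unit_cube h x *v \<xi>) \<bullet> \<xi>)"
    using continuous_on_quadratic_form[OF continuous_on_C2(3)[OF h]] by (simp add: unit_cube_def)
  from continuous_on_mult[OF continuous_on_const[of _ "1 / r"] this]
  show "continuous_on (cbox 0 1 \<times> sphere 0 1) (\<lambda>(x, \<xi>). (1 / r) *\<^sub>R (hess_on unit_cube h x *v \<xi>) \<bullet> \<xi>)"
    by (simp add: case_prod_unfold)
qed (use assms in auto)

lemma measure_near_coincidence:
  fixes f g :: "real^'m \<Rightarrow> real"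
  assumes "CARD('m) \<ge> 2" and f: "C2_on unit_cube f" and g: "C2_on unit_cube g" and "0 < K"
    and nondeg: "\<And>\<xi>::real^'m. norm \<xi> = 1 \<Longrightarrow> c2dist unit_cube f g / K \<le>
      (INF x\<in>unit_cube. \<bar>f x - g x\<bar> + norm (grad_on unit_cube (\<lambda>y. f y - g y) x)
        + \<bar>dd2 unit_cube (\<lambda>y. f y - g y) \<xi> x\<bar>)"
    and \<delta>: "0 < \<delta>" "2 * \<delta> \<le> c2dist unit_cube f g"
  shows "measure lebesgue {x\<in>unit_cube. \<bar>f x - g x\<bar> \<le> 2 * \<delta>}
    \<le> sublevel_const CARD('m) (min 1 (1 / K)) * (2 * \<delta> / c2dist unit_cube f g)
        * (1 + log 2 (c2dist unit_cube f g / (2 * \<delta>)))"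
proof -
  define h where "h = (\<lambda>y. f y - g y)"
  define r where "r = c2dist unit_cube f g"
  have "0 < r" using \<delta> unfolding r_def by simp
  interpret scaled: nondegenerate "\<lambda>x. h x / r" "\<lambda>x. (1 / r) *\<^sub>R grad_on unit_cube h x"
    "\<lambda>x v. (1 / r) *\<^sub>R (hess_on unit_cube h x *v v)" "min 1 (1 / K)"
  proof (rule nondegenerate_C2_scaled)
    show "C2_on unit_cube h" unfolding h_def by (rule C2_on_diff[OF f g])
    show "c2norm unit_cube h \<le> r" unfolding r_def c2dist_def h_def ..
    fix x \<xi> :: "real^'m" assume x: "x \<in> unit_cube" and \<xi>: "norm \<xi> = 1"
    have "min 1 (1 / K) * r \<le> r / K"
      using mult_right_mono[of "min 1 (1 / K)" "1 / K" r] \<open>0 < r\<close> by simp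
    also have "\<dots> \<le> (INF x\<in>unit_cube. \<bar>h x\<bar> + norm (grad_on unit_cube h x) + \<bar>dd2 unit_cube h \<xi> x\<bar>)"
      using nondeg[OF \<xi>] unfolding h_def r_def by simp
    also have "\<dots> \<le> \<bar>h x\<bar> + norm (grad_on unit_cube h x) + \<bar>dd2 unit_cube h \<xi> x\<bar>"
      by (rule cINF_lower[OF _ x]) (rule bdd_belowI2[of _ 0], auto)
    finally show "min 1 (1 / K) * r \<le> \<bar>h x\<bar> + norm (grad_on unit_cube h x) + \<bar>dd2 unit_cube h \<xi> x\<bar>" .
  qed (use assms \<open>0 < r\<close> in auto)
  define s where "s = 2 * \<delta> / r"
  have s: "0 < s" "s \<le> 1" unfolding s_def using \<delta> \<open>0 < r\<close> r_def by auto
  have "{x\<in>cbox 0 1. \<bar>h x / r\<bar> \<le> s} = {x\<in>unit_cube. \<bar>f x - g x\<bar> \<le> 2 * \<delta>}"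
    using \<open>0 < r\<close> by (auto simp: s_def h_def unit_cube_def abs_divide divide_le_cancel)
  moreover have "1 / s = r / (2 * \<delta>)" unfolding s_def by simp
  ultimately show ?thesis using scaled.sublevel_measure[OF s] unfolding s_def r_def by simp
qed

section \<open>Incidences of two \<open>\<delta>\<close>-neighbourhoods of graphs\<close>

lemma closed_fdelta:
  assumes "continuous_on unit_cube f" shows "closed (fdelta (f :: real^'m \<Rightarrow> real) \<delta>)"
proof -
  have c: "continuous_on (unit_cube \<times> UNIV) (\<lambda>p. \<bar>snd p - f (fst p)\<bar>)"
    by (intro continuous_intros continuous_on_compose2[OF assms continuous_on_fst]) auto
  have cl: "closed (unit_cube \<times> (UNIV :: real set))"
    using compact_imp_closed[OF compact_unit_cube] by (intro closed_Times) auto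
  have "fdelta f \<delta> = (unit_cube \<times> UNIV) \<inter> (\<lambda>p. \<bar>snd p - f (fst p)\<bar>) -` {..\<delta>}"
    unfolding fdelta_def by auto
  then show ?thesis using continuous_closed_preimage[OF c cl closed_atMost] by simp
qed

lemma closed_near_coincidence:
  fixes f g :: "real^'m \<Rightarrow> real"
  assumes "continuous_on unit_cube f" "continuous_on unit_cube g"
  shows "closed {x\<in>(unit_cube :: (real^'m) set). \<bar>f x - g x\<bar> \<le> c}"
proof -
  have c: "continuous_on unit_cube (\<lambda>x. \<bar>f x - g x\<bar>)" by (intro continuous_intros assms)
  have "{x\<in>unit_cube. \<bar>f x - g x\<bar> \<le> c} = unit_cube \<inter> (\<lambda>x. \<bar>f x - g x\<bar>) -` {..c}" by auto
  then show ?thesis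
    using continuous_closed_preimage[OF c compact_imp_closed[OF compact_unit_cube] closed_atMost] by simp
qed

lemma lmeasurable_near_coincidence:
  fixes f g :: "real^'m \<Rightarrow> real"
  assumes "continuous_on unit_cube f" "continuous_on unit_cube g"
  shows "{x\<in>unit_cube. \<bar>f x - g x\<bar> \<le> c} \<in> lmeasurable"
proof -
  have "bounded {x\<in>(unit_cube :: (real^'m) set). \<bar>f x - g x\<bar> \<le> c}"
    by (rule bounded_subset[OF compact_imp_bounded[OF compact_unit_cube]]) auto
  then show ?thesis
    using closed_near_coincidence[OF assms]
    by (simp add: lmeasurable_compact compact_eq_bounded_closed)
qed

lemma measure_near_coincidence_le_1:
  fixes f g :: "real^'m \<Rightarrow> real"
  assumes "continuous_on unit_cube f" "continuous_on unit_cube g"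
  shows "measure lebesgue {x\<in>unit_cube. \<bar>f x - g x\<bar> \<le> c} \<le> 1"
proof -
  have "measure lebesgue {x\<in>unit_cube. \<bar>f x - g x\<bar> \<le> c}
      \<le> measure lebesgue (unit_cube :: (real^'m) set)"
    using lmeasurable_near_coincidence[OF assms]
    by (intro measure_mono_fmeasurable) (auto simp: unit_cube_def)
  also have "\<dots> = 1" using measure_cube[of 1 "0::real^'m"] by (simp add: cube_0_1 unit_cube_def)
  finally show ?thesis .
qed

lemma emeasure_fibre_fdelta_Int_le:
  fixes f g :: "real^'m \<Rightarrow> real"
  assumes "0 < \<delta>"
  shows "emeasure lborel (Pair x -` (unit_cube \<times> {0..1} \<inter> fdelta f \<delta> \<inter> fdelta g \<delta>))
    \<le> ennreal (2 * \<delta>) * indicator {x\<in>unit_cube. \<bar>f x - g x\<bar> \<le> 2 * \<delta>} x"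
proof (cases "x \<in> unit_cube \<and> \<bar>f x - g x\<bar> \<le> 2 * \<delta>")
  case True
  have "Pair x -` (unit_cube \<times> {0..1} \<inter> fdelta f \<delta> \<inter> fdelta g \<delta>) \<subseteq> {f x - \<delta> .. f x + \<delta>}"
    unfolding fdelta_def by auto
  then have "emeasure lborel (Pair x -` (unit_cube \<times> {0..1} \<inter> fdelta f \<delta> \<inter> fdelta g \<delta>))
      \<le> emeasure lborel {f x - \<delta> .. f x + \<delta>}"
    by (rule emeasure_mono) simp
  also have "\<dots> = ennreal (2 * \<delta>)" using assms by (simp add: emeasure_lborel_Icc)
  finally show ?thesis using True by simp
next
  case False
  then have "Pair x -` (unit_cube \<times> {0..1} \<inter> fdelta f \<delta> \<inter> fdelta g \<delta>) = {}"
    unfolding fdelta_def by auto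
  then show ?thesis by simp
qed

text \<open>Fubini: every vertical fibre of \<open>f^\<delta> \<inter> g^\<delta>\<close> is an interval of length at most \<open>2 \<delta>\<close>, and it
  is empty unless \<open>\<bar>f - g\<bar> \<le> 2 \<delta>\<close> at its base point.\<close>

lemma measure_fdelta_Int_le:
  fixes f g :: "real^'m \<Rightarrow> real"
  assumes cf: "continuous_on unit_cube f" and cg: "continuous_on unit_cube g" and \<delta>: "0 < \<delta>"
  shows "measure lborel (unit_cube \<times> {0..1} \<inter> fdelta f \<delta> \<inter> fdelta g \<delta>)
     \<le> 2 * \<delta> * measure lebesgue {x\<in>unit_cube. \<bar>f x - g x\<bar> \<le> 2 * \<delta>}"
proof -
  define S where "S = unit_cube \<times> {0..1::real} \<inter> fdelta f \<delta> \<inter> fdelta g \<delta>"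
  define E where "E = {x\<in>(unit_cube :: (real^'m) set). \<bar>f x - g x\<bar> \<le> 2 * \<delta>}"
  have "closed S" unfolding S_def
    by (intro closed_Int closed_Times compact_imp_closed[OF compact_unit_cube] closed_fdelta[OF cf]
        closed_fdelta[OF cg] closed_atLeastAtMost)
  then have S: "S \<in> sets (lborel \<Otimes>\<^sub>M lborel)" unfolding lborel_prod by (simp add: borel_closed)
  have E: "E \<in> sets borel" "emeasure lborel E < \<infinity>"
    using lmeasurable_near_coincidence[OF cf cg] closed_near_coincidence[OF cf cg]
    by (auto simp: E_def borel_closed fmeasurable_def emeasure_completion)
  have "emeasure lborel S = emeasure (lborel \<Otimes>\<^sub>M lborel) S" by (simp add: lborel_prod)
  also have "\<dots> = \<integral>\<^sup>+ x. emeasure lborel (Pair x -` S) \<partial>lborel"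
    using S by (rule lborel.emeasure_pair_measure_alt)
  also have "\<dots> \<le> \<integral>\<^sup>+ x. ennreal (2 * \<delta>) * indicator E x \<partial>lborel"
    unfolding S_def E_def using \<delta> by (intro nn_integral_mono emeasure_fibre_fdelta_Int_le)
  also have "\<dots> = ennreal (2 * \<delta>) * emeasure lborel E"
    using nn_integral_cmult_indicator[of E lborel "ennreal (2 * \<delta>)"] E by (simp add: mult.commute)
  also have "\<dots> = ennreal (2 * \<delta> * measure lborel E)"
    using E \<delta> by (simp add: emeasure_eq_ennreal_measure ennreal_mult)
  finally have "measure lborel S \<le> 2 * \<delta> * measure lborel E"
    using \<delta> by (simp add: measure_def enn2real_leI)
  moreover have "measure lebesgue E = measure lborel E"
    using E by (simp add: measure_completion)
  ultimately show ?thesis unfolding S_def E_def by simp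
qed

lemma integral_sum_indicator_square:
  fixes F :: "(real^'m \<Rightarrow> real) set"
  assumes F: "finite F" "\<And>f. f \<in> F \<Longrightarrow> continuous_on unit_cube f"
  shows "set_lebesgue_integral lborel (unit_cube \<times> {0..1}) (\<lambda>p. (\<Sum>f\<in>F. indicator (fdelta f \<delta>) p)\<^sup>2)
     = (\<Sum>f\<in>F. \<Sum>g\<in>F. measure lborel (unit_cube \<times> {0..1} \<inter> fdelta f \<delta> \<inter> fdelta g \<delta>))"
proof -
  define X where "X = (unit_cube :: (real^'m) set) \<times> {0..1::real}"
  define A where "A f g = X \<inter> fdelta f \<delta> \<inter> fdelta g \<delta>" for f g :: "real^'m \<Rightarrow> real"
  have iA: "(indicator (A f g) p :: real)
      = indicator X p * (indicator (fdelta f \<delta>) p * indicator (fdelta g \<delta>) p)"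
    for f g and p :: "(real^'m) \<times> real"
    unfolding A_def by (simp add: indicator_inter_arith mult.assoc)
  have pw: "indicator X p *\<^sub>R (\<Sum>f\<in>F. indicator (fdelta f \<delta>) p)\<^sup>2
      = (\<Sum>f\<in>F. \<Sum>g\<in>F. (indicator (A f g) p :: real))"
    for p
    unfolding iA power2_eq_square sum_product by (simp add: sum_distrib_left)
  have Ab: "A f g \<in> sets lborel" and Afin: "emeasure lborel (A f g) < \<infinity>" if "f \<in> F" "g \<in> F" for f g
  proof -
    have "closed (A f g)" unfolding A_def X_def
      by (intro closed_Int closed_Times compact_imp_closed[OF compact_unit_cube] closed_fdelta F that
          closed_atLeastAtMost)
    then show "A f g \<in> sets lborel" by (simp add: borel_closed)
    have "bounded X"
      unfolding X_def using compact_unit_cube by (intro bounded_Times compact_imp_bounded) auto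
    then have "bounded (A f g)" unfolding A_def by (rule bounded_subset) auto
    then show "emeasure lborel (A f g) < \<infinity>" by (rule emeasure_bounded_finite)
  qed
  have int: "integrable lborel (\<lambda>p. indicator (A f g) p :: real)" if "f \<in> F" "g \<in> F" for f g
    by (rule integrable_real_indicator[OF Ab[OF that] Afin[OF that]])
  have "set_lebesgue_integral lborel X (\<lambda>p. (\<Sum>f\<in>F. indicator (fdelta f \<delta>) p)\<^sup>2)
      = (LINT p|lborel. (\<Sum>f\<in>F. \<Sum>g\<in>F. (indicator (A f g) p :: real)))"
    unfolding set_lebesgue_integral_def pw ..
  also have "\<dots> = (\<Sum>f\<in>F. LINT p|lborel. (\<Sum>g\<in>F. (indicator (A f g) p :: real)))"
    by (rule Bochner_Integration.integral_sum) (use int in \<open>auto intro!: integrable_sum\<close>)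
  also have "\<dots> = (\<Sum>f\<in>F. \<Sum>g\<in>F. LINT p|lborel. (indicator (A f g) p :: real))"
    by (rule sum.cong[OF refl], rule Bochner_Integration.integral_sum) (use int in auto)
  also have "\<dots> = (\<Sum>f\<in>F. \<Sum>g\<in>F. measure lborel (A f g))"
    by (simp add: integral_indicator)
  finally show ?thesis unfolding X_def A_def .
qed

section \<open>Counting in separated \<open>(\<delta>, t)\<close>-sets\<close>

lemma self_cover:
  assumes "finite A" "A \<subseteq> X" "0 \<le> \<delta>" "\<And>x. x \<in> A \<Longrightarrow> d x x = 0"
  shows "A \<in> {C. finite C \<and> C \<subseteq> X \<and> A \<subseteq> (\<Union>c\<in>C. {y. d c y \<le> \<delta>})}"
proof -
  have "A \<subseteq> (\<Union>c\<in>A. {y. d c y \<le> \<delta>})" using assms(3,4) by force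
  then show ?thesis using assms(1,2) by blast
qed

lemma covnum_le_card:
  assumes "finite A" "A \<subseteq> X" "0 \<le> \<delta>" "\<And>x. x \<in> A \<Longrightarrow> d x x = 0"
  shows "covnum X d A \<delta> \<le> card A"
proof -
  have "card A \<in> card ` {C. finite C \<and> C \<subseteq> X \<and> A \<subseteq> (\<Union>c\<in>C. {y. d c y \<le> \<delta>})}"
    using self_cover[of A X \<delta> d, OF assms] by (rule imageI)
  then show ?thesis unfolding covnum_def Inf_nat_def by (rule Least_le)
qed

lemma obtain_minimal_cover:
  assumes "finite A" "A \<subseteq> X" "0 \<le> \<delta>" "\<And>x. x \<in> A \<Longrightarrow> d x x = 0"
  obtains C where "finite C" "C \<subseteq> X" "A \<subseteq> (\<Union>c\<in>C. {y. d c y \<le> \<delta>})" "card C = covnum X d A \<delta>"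
proof -
  let ?covers = "{C. finite C \<and> C \<subseteq> X \<and> A \<subseteq> (\<Union>c\<in>C. {y. d c y \<le> \<delta>})}"
  have "card A \<in> card ` ?covers" using self_cover[of A X \<delta> d, OF assms] by (rule imageI)
  then have "Inf (card ` ?covers) \<in> card ` ?covers" by (intro Inf_nat_def1) blast
  then obtain C where "C \<in> ?covers" "card C = covnum X d A \<delta>"
    unfolding covnum_def by (rule imageE) simp
  then show ?thesis using that by blast
qed

lemma card_le_mult_covnum:
  assumes F: "finite F" "A \<subseteq> F" "A \<subseteq> X" and "0 \<le> \<delta>" "\<And>x. x \<in> A \<Longrightarrow> d x x = 0"
    and P: "\<And>c. c \<in> X \<Longrightarrow> real (card (F \<inter> {y. d c y \<le> \<delta>})) \<le> P"
  shows "real (card A) \<le> P * real (covnum X d A \<delta>)"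
proof -
  obtain C where C: "finite C" "C \<subseteq> X" "A \<subseteq> (\<Union>c\<in>C. {y. d c y \<le> \<delta>})" "card C = covnum X d A \<delta>"
    using obtain_minimal_cover[of A X \<delta> d, OF finite_subset[OF F(2,1)] F(3) assms(4,5)] by blast
  have "A \<subseteq> (\<Union>c\<in>C. F \<inter> {y. d c y \<le> \<delta>})" using C(3) F(2) by blast
  then have "card A \<le> card (\<Union>c\<in>C. F \<inter> {y. d c y \<le> \<delta>})"
    by (rule card_mono[rotated]) (use F(1) C(1) in simp)
  also have "\<dots> \<le> (\<Sum>c\<in>C. card (F \<inter> {y. d c y \<le> \<delta>}))" by (rule card_UN_le[OF C(1)])
  finally have "real (card A) \<le> (\<Sum>c\<in>C. real (card (F \<inter> {y. d c y \<le> \<delta>})))"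
    by (simp flip: of_nat_sum)
  also have "\<dots> \<le> (\<Sum>c\<in>C. P)" using C(2) P by (intro sum_mono) auto
  finally show ?thesis using C(4) by (simp add: mult.commute)
qed

lemma card_ball_le_doubling:
  assumes "doubling d F D" "finite F" "c \<in> F" "0 < r" "0 \<le> M"
    and half: "\<And>c'. c' \<in> F \<Longrightarrow> real (card (F \<inter> {y. d c' y \<le> r / 2})) \<le> M"
  shows "real (card (F \<inter> {y. d c y \<le> r})) \<le> D * M"
proof -
  obtain C where C: "finite C" "C \<subseteq> F" "real (card C) \<le> D"
    "{y\<in>F. d c y \<le> r} \<subseteq> (\<Union>c1\<in>C. {y. d c1 y \<le> r / 2})"
    using assms(1)[unfolded doubling_def, rule_format, OF assms(3,4)] by blast
  have "F \<inter> {y. d c y \<le> r} \<subseteq> (\<Union>c1\<in>C. F \<inter> {y. d c1 y \<le> r / 2})" using C(4) by blast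
  then have "card (F \<inter> {y. d c y \<le> r}) \<le> card (\<Union>c1\<in>C. F \<inter> {y. d c1 y \<le> r / 2})"
    by (rule card_mono[rotated]) (use assms(2) C(1) in simp)
  also have "\<dots> \<le> (\<Sum>c1\<in>C. card (F \<inter> {y. d c1 y \<le> r / 2}))" by (rule card_UN_le[OF C(1)])
  finally have "real (card (F \<inter> {y. d c y \<le> r})) \<le> (\<Sum>c1\<in>C. real (card (F \<inter> {y. d c1 y \<le> r / 2})))"
    by (simp flip: of_nat_sum)
  also have "\<dots> \<le> (\<Sum>c1\<in>C. M)" using C(2) half by (intro sum_mono) auto
  also have "\<dots> \<le> D * M" using C(3) \<open>0 \<le> M\<close> by (simp add: mult_right_mono)
  finally show ?thesis .
qed

lemma C2X_C2_on: "f \<in> C2X \<Longrightarrow> C2_on unit_cube f"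
  unfolding C2X_def by auto

lemma doubling_max_0:
  assumes "doubling d F D"
  shows "doubling d F (max 0 D)"
  unfolding doubling_def
proof (intro ballI allI impI)
  fix x r assume "x \<in> F" "(0::real) < r"
  then obtain C where "finite C" "C \<subseteq> F" "real (card C) \<le> D"
    "{y\<in>F. d x y \<le> r} \<subseteq> (\<Union>c\<in>C. {y. d c y \<le> r / 2})"
    using assms[unfolded doubling_def, rule_format, OF \<open>x \<in> F\<close> \<open>0 < r\<close>] by blast
  then show "\<exists>C. finite C \<and> C \<subseteq> F \<and> real (card C) \<le> max 0 D \<and>
      {y\<in>F. d x y \<le> r} \<subseteq> (\<Union>c\<in>C. {y. d c y \<le> r / 2})"
    by (intro exI[of _ C]) auto
qed

lemma c2dist_triangle3:
  assumes "c \<in> C2X" "y \<in> C2X" "z \<in> C2X"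
  shows "c2dist unit_cube y z \<le> c2dist unit_cube c y + c2dist unit_cube c z"
proof -
  have "c2dist unit_cube y z \<le> c2dist unit_cube y c + c2dist unit_cube c z"
    by (rule c2dist_triangle) (use assms C2X_C2_on in auto)
  also have "c2dist unit_cube y c = c2dist unit_cube c y"
    by (rule c2dist_commute) (use assms C2X_C2_on in auto)
  finally show ?thesis .
qed

lemma card_ball_separated_le_1:
  assumes "finite F" "F \<subseteq> C2X" "separated (c2dist unit_cube) F \<delta>" "0 < \<delta>" "c \<in> F"
  shows "card (F \<inter> {y. c2dist unit_cube c y \<le> \<delta> / 4}) \<le> 1"
proof -
  have "y = z"
    if "y \<in> F \<inter> {y. c2dist unit_cube c y \<le> \<delta> / 4}" "z \<in> F \<inter> {y. c2dist unit_cube c y \<le> \<delta> / 4}"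
    for y z
  proof (rule ccontr)
    assume "y \<noteq> z"
    moreover have "y \<in> F" "z \<in> F" using that by auto
    ultimately have "\<delta> \<le> c2dist unit_cube y z" using assms(3) unfolding separated_def by blast
    also have "\<dots> \<le> c2dist unit_cube c y + c2dist unit_cube c z"
      using c2dist_triangle3[of c y z] assms(2,5) \<open>y \<in> F\<close> \<open>z \<in> F\<close> by blast
    also have "\<dots> \<le> \<delta> / 2" using that by simp
    finally show False using \<open>0 < \<delta>\<close> by simp
  qed
  then have "card (F \<inter> {y. c2dist unit_cube c y \<le> \<delta> / 4}) \<le> Suc 0"
    using assms(1) by (subst card_le_Suc0_iff_eq) auto
  then show ?thesis by simp
qed

text \<open>Three doublings lead from radius \<open>\<delta> / 4\<close>, where separation leaves a single point, to
  radius \<open>2 \<delta>\<close>, which contains every \<open>\<delta>\<close>-ball centred anywhere that meets \<open>F\<close>.\<close>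

lemma card_ball_separated_le:
  assumes dbl: "doubling (c2dist unit_cube) F D" and F: "finite F" "F \<subseteq> C2X"
    and sep: "separated (c2dist unit_cube) F \<delta>" and "0 < \<delta>" and c: "c \<in> C2X"
  shows "real (card (F \<inter> {y. c2dist unit_cube c y \<le> \<delta>})) \<le> (max 0 D) ^ 3"
proof (cases "F \<inter> {y. c2dist unit_cube c y \<le> \<delta>} = {}")
  case True
  then show ?thesis by simp
next
  case False
  then obtain a where a: "a \<in> F" "c2dist unit_cube c a \<le> \<delta>" by blast
  note dbl' = doubling_max_0[OF dbl]
  have "real (card (F \<inter> {y. c2dist unit_cube c' y \<le> \<delta> / 4})) \<le> 1" if "c' \<in> F" for c'
    using card_ball_separated_le_1[OF F sep \<open>0 < \<delta>\<close> that] by simp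
  then have "real (card (F \<inter> {y. c2dist unit_cube c' y \<le> \<delta> / 2})) \<le> max 0 D * 1" if "c' \<in> F" for c'
    using card_ball_le_doubling[OF dbl' F(1) that, of "\<delta> / 2" 1] \<open>0 < \<delta>\<close> by simp
  then have "real (card (F \<inter> {y. c2dist unit_cube c' y \<le> \<delta>})) \<le> max 0 D * (max 0 D * 1)"
    if "c' \<in> F" for c'
    using card_ball_le_doubling[OF dbl' F(1) that, of \<delta>] \<open>0 < \<delta>\<close> by simp
  then have "real (card (F \<inter> {y. c2dist unit_cube a y \<le> 2 * \<delta>})) \<le> max 0 D * (max 0 D * (max 0 D * 1))"
    using card_ball_le_doubling[OF dbl' F(1) a(1), of "2 * \<delta>"] \<open>0 < \<delta>\<close> by simp
  moreover have "F \<inter> {y. c2dist unit_cube c y \<le> \<delta>} \<subseteq> F \<inter> {y. c2dist unit_cube a y \<le> 2 * \<delta>}"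
  proof
    fix y assume y: "y \<in> F \<inter> {y. c2dist unit_cube c y \<le> \<delta>}"
    then have "c2dist unit_cube a y \<le> c2dist unit_cube c a + c2dist unit_cube c y"
      using c2dist_triangle3[OF c, of a y] a F(2) by blast
    then show "y \<in> F \<inter> {y. c2dist unit_cube a y \<le> 2 * \<delta>}" using y a by simp
  qed
  then have "card (F \<inter> {y. c2dist unit_cube c y \<le> \<delta>}) \<le> card (F \<inter> {y. c2dist unit_cube a y \<le> 2 * \<delta>})"
    by (rule card_mono[rotated]) (use F(1) in simp)
  ultimately show ?thesis by (simp add: power3_eq_cube)
qed

lemma card_ball_delta_t_set_le:
  assumes F: "finite F" "F \<subseteq> C2X" and dbl: "doubling (c2dist unit_cube) F D"
    and sep: "separated (c2dist unit_cube) F \<delta>" and "0 < \<delta>"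
    and tc: "delta_t_C_set C2X (c2dist unit_cube) F \<delta> t C" and "0 \<le> C" and f: "f \<in> F" and "\<delta> \<le> \<rho>"
  shows "real (card {g\<in>F. c2dist unit_cube f g \<le> \<rho>}) \<le> (max 0 D)^3 * (C * \<rho> powr t * real (card F))"
proof -
  define A where "A = F \<inter> {y. c2dist unit_cube f y \<le> \<rho>}"
  have self: "c2dist unit_cube x x = 0" if "x \<in> F" for x
    using c2dist_self C2X_C2_on F(2) that by blast
  have "A \<subseteq> F" "A \<subseteq> C2X" using F(2) unfolding A_def by auto
  then have "real (card A) \<le> (max 0 D)^3 * real (covnum C2X (c2dist unit_cube) A \<delta>)"
    using card_ball_separated_le[OF dbl F sep \<open>0 < \<delta>\<close>] self \<open>0 < \<delta>\<close>
    by (intro card_le_mult_covnum[OF F(1)]) auto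
  also have "\<dots> \<le> (max 0 D)^3 * (C * \<rho> powr t * real (covnum C2X (c2dist unit_cube) F \<delta>))"
    using tc f F(2) \<open>\<delta> \<le> \<rho>\<close> unfolding delta_t_C_set_def A_def by (intro mult_left_mono) auto
  also have "\<dots> \<le> (max 0 D)^3 * (C * \<rho> powr t * real (card F))"
    using covnum_le_card[OF F] self \<open>0 < \<delta>\<close> \<open>0 \<le> C\<close> by (intro mult_left_mono) auto
  also have "A = {g\<in>F. c2dist unit_cube f g \<le> \<rho>}" unfolding A_def by blast
  finally show ?thesis .
qed

section \<open>Dyadic summation\<close>

lemma le_sum_dyadic_weights:
  fixes r w :: real
  assumes "0 < \<delta>" "1 \<le> B" "r \<le> 2^J * \<delta>" "w \<le> 1" "\<delta> < r \<Longrightarrow> w \<le> B * \<delta> / r"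
  shows "w \<le> (\<Sum>k\<le>J. if r \<le> 2^k * \<delta> then (if k = 0 then 1 else 2 * B / 2^k) else 0)"
proof -
  define c :: "nat \<Rightarrow> real" where "c k = (if k = 0 then 1 else 2 * B / 2^k)" for k
  obtain k where k: "k \<le> J" "r \<le> 2^k * \<delta>" "w \<le> c k"
  proof (cases "r \<le> \<delta>")
    case True
    then show ?thesis using that[of 0] assms(4) by (simp add: c_def)
  next
    case False
    then obtain j where j: "1 \<le> j" "j \<le> J" "2^j * \<delta> < 2 * r" "r \<le> 2^j * \<delta>"
      using dyadic_scale[OF assms(1) _ assms(3)] by auto
    have "\<delta> / r \<le> 2 / 2^j" using j(3) \<open>0 < \<delta>\<close> False by (simp add: field_simps)
    then have "B * (\<delta> / r) \<le> B * (2 / 2^j)" using assms(2) by (intro mult_left_mono) auto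
    then have "w \<le> c j" using assms(5) False j(1) by (simp add: c_def mult.commute)
    then show ?thesis using that j by blast
  qed
  have "c k = (if r \<le> 2^k * \<delta> then c k else 0)" using k(2) by simp
  also have "\<dots> \<le> (\<Sum>k\<le>J. if r \<le> 2^k * \<delta> then c k else 0)"
    using k(1) assms(2) by (intro member_le_sum) (auto simp: c_def)
  finally show ?thesis using k(3) unfolding c_def by simp
qed

text \<open>Each dyadic shell \<open>2^(k-1) \<delta> < r g \<le> 2^k \<delta>\<close> contributes at most \<open>2 B Q \<delta>^t\<close>.\<close>

lemma sum_le_dyadic:
  fixes F :: "'a set" and r w :: "'a \<Rightarrow> real"
  assumes F: "finite F" and \<delta>: "0 < \<delta>" and t: "0 < t" "t \<le> 1"
    and r: "\<And>g. g \<in> F \<Longrightarrow> r g \<le> 2^J * \<delta>"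
    and w1: "\<And>g. g \<in> F \<Longrightarrow> w g \<le> 1"
    and w2: "\<And>g. g \<in> F \<Longrightarrow> \<delta> < r g \<Longrightarrow> w g \<le> B * \<delta> / r g" and B: "1 \<le> B"
    and count: "\<And>\<rho>. \<delta> \<le> \<rho> \<Longrightarrow> real (card {g\<in>F. r g \<le> \<rho>}) \<le> Q * \<rho> powr t" and Q: "0 \<le> Q"
  shows "(\<Sum>g\<in>F. w g) \<le> real (J + 1) * (2 * B) * Q * \<delta> powr t"
proof -
  define c :: "nat \<Rightarrow> real" where "c k = (if k = 0 then 1 else 2 * B / 2^k)" for k
  have "(\<Sum>g\<in>F. w g) \<le> (\<Sum>g\<in>F. \<Sum>k\<le>J. if r g \<le> 2^k * \<delta> then c k else 0)"
    unfolding c_def using le_sum_dyadic_weights[OF \<delta> B r w1 w2] by (intro sum_mono) blast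
  also have "\<dots> = (\<Sum>k\<le>J. c k * real (card {g\<in>F. r g \<le> 2^k * \<delta>}))"
    by (subst sum.swap) (simp add: sum.If_cases[OF F] Int_def mult.commute)
  also have "\<dots> \<le> (\<Sum>k\<le>J. 2 * B * Q * \<delta> powr t)"
  proof (rule sum_mono)
    fix k
    have "c k * real (card {g\<in>F. r g \<le> 2^k * \<delta>}) \<le> c k * (Q * (2^k * \<delta>) powr t)"
      using count[of "2^k * \<delta>"] \<delta> B by (intro mult_left_mono) (auto simp: c_def)
    also have "(2^k * \<delta>) powr t \<le> 2^k * \<delta> powr t"
      using powr_mono[of t 1 "2^k"] t \<delta> by (simp add: powr_mult)
    then have "c k * (Q * (2^k * \<delta>) powr t) \<le> c k * (Q * (2^k * \<delta> powr t))"
      using Q B by (intro mult_left_mono) (auto simp: c_def)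
    also have "\<dots> \<le> 2 * B * Q * \<delta> powr t"
      using B Q mult_right_mono[of 1 "2 * B" "Q * \<delta> powr t"] by (simp add: c_def)
    finally show "c k * real (card {g\<in>F. r g \<le> 2^k * \<delta>}) \<le> 2 * B * Q * \<delta> powr t" .
  qed
  finally show ?thesis by simp
qed

lemma one_plus_log_square_le_powr:
  assumes "0 < \<epsilon>" and x: "(1 + 4 / (\<epsilon> * ln 2)) powr (4 / \<epsilon>) \<le> x"
  shows "(1 + log 2 x)\<^sup>2 \<le> x powr \<epsilon>"
proof -
  define c where "c = 4 / (\<epsilon> * ln 2)"
  define y where "y = x powr (\<epsilon> / 4)"
  have "0 < c" unfolding c_def using \<open>0 < \<epsilon>\<close> by simp
  have "1 \<le> (1 + c) powr (4 / \<epsilon>)" using \<open>0 < c\<close> \<open>0 < \<epsilon>\<close> by (intro ge_one_powr_ge_zero) auto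
  then have "1 \<le> x" using x unfolding c_def by linarith
  have "1 + c = ((1 + c) powr (4 / \<epsilon>)) powr (\<epsilon> / 4)"
    using \<open>0 < c\<close> \<open>0 < \<epsilon>\<close> by (simp add: powr_powr)
  also have "\<dots> \<le> y" unfolding y_def c_def using x \<open>0 < c\<close> \<open>0 < \<epsilon>\<close> by (intro powr_mono2) auto
  finally have "1 + c \<le> y" .
  have "(\<epsilon> / 4) * ln x = ln y" unfolding y_def using \<open>1 \<le> x\<close> by (simp add: ln_powr)
  also have "\<dots> \<le> y" using \<open>1 + c \<le> y\<close> \<open>0 < c\<close> ln_le_minus_one[of y] by linarith
  finally have "log 2 x \<le> c * y" unfolding c_def log_def using \<open>0 < \<epsilon>\<close> by (simp add: field_simps)
  then have "1 + log 2 x \<le> y * y"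
    using \<open>1 + c \<le> y\<close> \<open>0 < c\<close> mult_right_mono[of "1 + c" y y] by (simp add: algebra_simps)
  then have "(1 + log 2 x)\<^sup>2 \<le> (y * y)\<^sup>2" using \<open>1 \<le> x\<close> by (intro power_mono) auto
  also have "(y * y)\<^sup>2 = x powr \<epsilon>"
    unfolding y_def using \<open>1 \<le> x\<close> by (simp add: power2_eq_square powr_add[symmetric])
  finally show ?thesis .
qed

lemma log_square_le_powr:
  assumes "0 < \<epsilon>"
  shows "\<exists>\<delta>0\<in>{0<..1/2}. \<forall>\<delta>\<in>{0<..\<delta>0}. (1 + log 2 (1 / \<delta>))\<^sup>2 \<le> \<delta> powr (-\<epsilon>)"
proof
  define X where "X = (1 + 4 / (\<epsilon> * ln 2)) powr (4 / \<epsilon>)"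
  have "0 < 1 + 4 / (\<epsilon> * ln 2)" using assms by (simp add: add_pos_pos)
  then have "0 < X" unfolding X_def by (simp only: powr_gt_zero)
  show "min (1/2) (1 / X) \<in> {0<..1/2}" using \<open>0 < X\<close> by auto
  show "\<forall>\<delta>\<in>{0<..min (1/2) (1 / X)}. (1 + log 2 (1 / \<delta>))\<^sup>2 \<le> \<delta> powr (-\<epsilon>)"
  proof
    fix \<delta> assume "\<delta> \<in> {0<..min (1/2) (1 / X)}"
    then have "X \<le> 1 / \<delta>" "0 < \<delta>" using \<open>0 < X\<close> by (auto simp: field_simps)
    then show "(1 + log 2 (1 / \<delta>))\<^sup>2 \<le> \<delta> powr (-\<epsilon>)"
      using one_plus_log_square_le_powr[OF assms, of "1 / \<delta>"] unfolding X_def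
      by (simp add: powr_minus_divide powr_divide)
  qed
qed

lemma c2dist_le_cinematic_const:
  assumes "cinematic unit_cube K D \<alpha> \<eta>0 F" "f \<in> F" "g \<in> F"
  shows "c2dist unit_cube f g \<le> K"
proof -
  have "\<exists>h. C2_on unit_cube h \<and> (\<forall>f\<in>F. c2dist unit_cube f h \<le> K / 2)"
    using assms(1) by (simp add: cinematic_def)
  then obtain h where h: "C2_on unit_cube h" "\<And>f. f \<in> F \<Longrightarrow> c2dist unit_cube f h \<le> K / 2"
    by blast
  have C2: "C2_on unit_cube f" "C2_on unit_cube g" using assms unfolding cinematic_def by auto
  have "c2dist unit_cube f g \<le> c2dist unit_cube f h + c2dist unit_cube h g"
    by (rule c2dist_triangle) (use C2 h in auto)
  also have "c2dist unit_cube h g = c2dist unit_cube g h" by (rule c2dist_commute) (use C2 h in auto)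
  finally show ?thesis using h(2)[OF assms(2)] h(2)[OF assms(3)] by linarith
qed

lemma measure_near_coincidence_cinematic:
  fixes F :: "(real^'m \<Rightarrow> real) set"
  assumes "CARD('m) \<ge> 2" and cin: "cinematic unit_cube K D \<alpha> \<eta>0 F" and fg: "f \<in> F" "g \<in> F"
    and \<delta>: "0 < \<delta>" "\<delta> < c2dist unit_cube f g"
  shows "measure lebesgue {x\<in>unit_cube. \<bar>f x - g x\<bar> \<le> 2 * \<delta>}
    \<le> 2 * max 1 (sublevel_const CARD('m) (min 1 (1 / K))) * (1 + max 0 (log 2 (K / \<delta>)))
        * \<delta> / c2dist unit_cube f g"
    (is "?E \<le> 2 * ?A * ?L * \<delta> / ?d")
proof (cases "2 * \<delta> \<le> ?d")
  case True
  have "0 < K" "C2_on unit_cube f" "C2_on unit_cube g" using cin fg unfolding cinematic_def by auto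
  have "?E \<le> sublevel_const CARD('m) (min 1 (1 / K)) * (2 * \<delta> / ?d) * (1 + log 2 (?d / (2 * \<delta>)))"
    using cin fg unfolding cinematic_def
    by (intro measure_near_coincidence[OF assms(1) \<open>C2_on unit_cube f\<close> \<open>C2_on unit_cube g\<close>
          \<open>0 < K\<close> _ \<delta>(1) True]) auto
  also have "\<dots> \<le> ?A * (2 * \<delta> / ?d) * ?L"
  proof (intro mult_mono)
    have "?d / (2 * \<delta>) \<le> K / \<delta>"
      using c2dist_le_cinematic_const[OF cin fg] \<delta> by (simp add: field_simps)
    then have "log 2 (?d / (2 * \<delta>)) \<le> log 2 (K / \<delta>)" using \<delta> by (intro log_mono) auto
    then show "1 + log 2 (?d / (2 * \<delta>)) \<le> ?L" by linarith
    show "0 \<le> 1 + log 2 (?d / (2 * \<delta>))" using True \<delta> by simp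
  qed (use \<delta> in auto)
  finally show ?thesis by (simp add: algebra_simps)
next
  case False
  have "continuous_on unit_cube f" "continuous_on unit_cube g"
    using cin fg continuous_on_C2(1) unfolding cinematic_def by auto
  then have "?E \<le> 1" by (rule measure_near_coincidence_le_1)
  also have "\<dots> \<le> 2 * \<delta> / ?d" using False \<delta> by simp
  also have "\<dots> \<le> 2 * ?A * ?L * \<delta> / ?d"
    using \<delta> mult_mono[of 1 ?A 1 ?L] by (intro divide_right_mono) auto
  finally show ?thesis .
qed

lemma sum_measure_near_coincidence_le:
  fixes F :: "(real^'m \<Rightarrow> real) set"
  assumes "CARD('m) \<ge> 2" and F: "finite F" "F \<subseteq> C2X" and sep: "separated (c2dist unit_cube) F \<delta>"
    and tc: "delta_t_C_set C2X (c2dist unit_cube) F \<delta> t (\<delta> powr (-\<epsilon>))"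
    and cin: "cinematic unit_cube K D \<alpha> \<eta>0 F" and "0 < \<delta>" "0 < t" "t \<le> 1" and f: "f \<in> F"
  shows "(\<Sum>g\<in>F. measure lebesgue {x\<in>unit_cube. \<bar>f x - g x\<bar> \<le> 2 * \<delta>})
    \<le> 8 * max 1 (sublevel_const CARD('m) (min 1 (1 / K))) * (max 0 D)^3
        * (1 + max 0 (log 2 (K / \<delta>)))\<^sup>2 * \<delta> powr (t - \<epsilon>) * real (card F)"
proof -
  define A where "A = max 1 (sublevel_const CARD('m) (min 1 (1 / K)))"
  define L where "L = 1 + max 0 (log 2 (K / \<delta>))"
  define J where "J = nat \<lceil>log 2 (K / \<delta>)\<rceil>"
  define Q where "Q = (max 0 D)^3 * (\<delta> powr (-\<epsilon>) * real (card F))"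
  have "0 < K" "doubling (c2dist unit_cube) F D" using cin unfolding cinematic_def by auto
  have AL: "1 \<le> A" "1 \<le> L" "real J \<le> L" unfolding A_def L_def J_def by auto linarith
  then have "1 \<le> A * L" using mult_mono[of 1 A 1 L] by simp
  have "K / \<delta> \<le> 2 ^ J"
    unfolding J_def using \<open>0 < K\<close> \<open>0 < \<delta>\<close> by (intro le_two_power_nat_ceiling_log) simp
  then have K: "K \<le> 2 ^ J * \<delta>" using \<open>0 < \<delta>\<close> by (simp add: field_simps)
  have "(\<Sum>g\<in>F. measure lebesgue {x\<in>unit_cube. \<bar>f x - g x\<bar> \<le> 2 * \<delta>})
      \<le> real (J + 1) * (2 * (2 * A * L)) * Q * \<delta> powr t"
  proof (rule sum_le_dyadic[OF F(1) \<open>0 < \<delta>\<close> \<open>0 < t\<close> \<open>t \<le> 1\<close>, where r = "c2dist unit_cube f"])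
    fix g assume g: "g \<in> F"
    show "c2dist unit_cube f g \<le> 2 ^ J * \<delta>" using c2dist_le_cinematic_const[OF cin f g] K by linarith
    show "measure lebesgue {x\<in>unit_cube. \<bar>f x - g x\<bar> \<le> 2 * \<delta>} \<le> 1"
      using cin f g continuous_on_C2(1) unfolding cinematic_def
      by (intro measure_near_coincidence_le_1) auto
    assume "\<delta> < c2dist unit_cube f g"
    then show "measure lebesgue {x\<in>unit_cube. \<bar>f x - g x\<bar> \<le> 2 * \<delta>}
        \<le> 2 * A * L * \<delta> / c2dist unit_cube f g"
      unfolding A_def L_def by (rule measure_near_coincidence_cinematic[OF assms(1) cin f g \<open>0 < \<delta>\<close>])
  next
    fix \<rho> assume "\<delta> \<le> \<rho>"
    then show "real (card {g\<in>F. c2dist unit_cube f g \<le> \<rho>}) \<le> Q * \<rho> powr t"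
      using card_ball_delta_t_set_le[OF F \<open>doubling _ F D\<close> sep \<open>0 < \<delta>\<close> tc _ f] unfolding Q_def
      by (simp add: algebra_simps)
  qed (use AL \<open>1 \<le> A * L\<close> in \<open>auto simp: Q_def\<close>)
  also have "\<dots> \<le> (2 * L) * (2 * (2 * A * L)) * Q * \<delta> powr t"
    using AL by (intro mult_right_mono) (auto simp: Q_def)
  also have "\<dots> = 8 * A * (max 0 D)^3 * L\<^sup>2 * (\<delta> powr t * \<delta> powr (-\<epsilon>)) * real (card F)"
    by (simp add: Q_def power2_eq_square algebra_simps)
  also have "\<delta> powr t * \<delta> powr (-\<epsilon>) = \<delta> powr (t - \<epsilon>)" by (simp add: powr_add[symmetric])
  finally show ?thesis unfolding A_def L_def .
qed

lemma square_one_plus_log_div_le: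
  assumes "0 < K" "0 < \<delta>" "\<delta> \<le> 1"
  shows "(1 + max 0 (log 2 (K / \<delta>)))\<^sup>2 \<le> (1 + \<bar>log 2 K\<bar>)\<^sup>2 * (1 + log 2 (1 / \<delta>))\<^sup>2"
proof -
  have "log 2 (K / \<delta>) = log 2 K + log 2 (1 / \<delta>)"
    using assms by (simp add: log_divide log_mult[symmetric])
  moreover have "0 \<le> log 2 (1 / \<delta>)" using assms by simp
  ultimately have "1 + max 0 (log 2 (K / \<delta>)) \<le> (1 + \<bar>log 2 K\<bar>) * (1 + log 2 (1 / \<delta>))"
    by (simp add: algebra_simps) (smt (verit) mult_nonneg_nonneg abs_ge_zero)
  then show ?thesis by (simp add: power_mult_distrib[symmetric] power_mono)
qed

definition incidence_const :: "nat \<Rightarrow> real \<Rightarrow> real \<Rightarrow> real" where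
  "incidence_const m K D =
     16 * max 1 (sublevel_const m (min 1 (1 / K))) * (max 0 D)^3 * (1 + \<bar>log 2 K\<bar>)\<^sup>2"

theorem integral_incidence_le_log:
  fixes F :: "(real^'m \<Rightarrow> real) set"
  assumes "CARD('m) \<ge> 2" and F: "finite F" "F \<subseteq> C2X" and sep: "separated (c2dist unit_cube) F \<delta>"
    and tc: "delta_t_C_set C2X (c2dist unit_cube) F \<delta> t (\<delta> powr (-\<epsilon>))"
    and cin: "cinematic unit_cube K D \<alpha> \<eta>0 F" and \<delta>: "0 < \<delta>" "\<delta> \<le> 1" and t: "0 < t" "t \<le> 1"
  shows "set_lebesgue_integral lborel (unit_cube \<times> {0..1}) (\<lambda>p. (\<Sum>f\<in>F. indicator (fdelta f \<delta>) p)\<^sup>2)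
    \<le> incidence_const CARD('m) K D * (1 + log 2 (1 / \<delta>))\<^sup>2 * \<delta> powr (1 + t - \<epsilon>) * real (card F)^2"
proof -
  define A where "A = max 1 (sublevel_const CARD('m) (min 1 (1 / K)))"
  define L where "L = 1 + max 0 (log 2 (K / \<delta>))"
  have "0 < K" using cin unfolding cinematic_def by auto
  have cont: "continuous_on unit_cube f" if "f \<in> F" for f
    using cin that continuous_on_C2(1) unfolding cinematic_def by auto
  have "set_lebesgue_integral lborel (unit_cube \<times> {0..1}) (\<lambda>p. (\<Sum>f\<in>F. indicator (fdelta f \<delta>) p)\<^sup>2)
      = (\<Sum>f\<in>F. \<Sum>g\<in>F. measure lborel (unit_cube \<times> {0..1} \<inter> fdelta f \<delta> \<inter> fdelta g \<delta>))"
    by (rule integral_sum_indicator_square[OF F(1) cont])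
  also have "\<dots> \<le> (\<Sum>f\<in>F. 2 * \<delta> * (\<Sum>g\<in>F. measure lebesgue {x\<in>unit_cube. \<bar>f x - g x\<bar> \<le> 2 * \<delta>}))"
    unfolding sum_distrib_left by (intro sum_mono measure_fdelta_Int_le cont \<delta>(1))
  also have "\<dots> \<le> (\<Sum>f\<in>F. 2 * \<delta> * (8 * A * (max 0 D)^3 * L\<^sup>2 * \<delta> powr (t - \<epsilon>) * real (card F)))"
    unfolding A_def L_def using sum_measure_near_coincidence_le[OF assms(1) F sep tc cin \<delta>(1) t] \<delta>
    by (intro sum_mono mult_left_mono) auto
  also have "\<dots> = 16 * A * (max 0 D)^3 * L\<^sup>2 * (\<delta> * \<delta> powr (t - \<epsilon>)) * real (card F)^2"
    by (simp add: power2_eq_square algebra_simps)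
  also have "\<delta> * \<delta> powr (t - \<epsilon>) = \<delta> powr (1 + t - \<epsilon>)"
    using powr_add[of \<delta> 1 "t - \<epsilon>"] \<delta> by (simp add: add_diff_eq)
  also have "16 * A * (max 0 D)^3 * L\<^sup>2 * \<delta> powr (1 + t - \<epsilon>) * real (card F)^2
      \<le> 16 * A * (max 0 D)^3 * ((1 + \<bar>log 2 K\<bar>)\<^sup>2 * (1 + log 2 (1 / \<delta>))\<^sup>2)
        * \<delta> powr (1 + t - \<epsilon>) * real (card F)^2"
    unfolding L_def using square_one_plus_log_div_le[OF \<open>0 < K\<close> \<delta>]
    by (intro mult_right_mono mult_left_mono) (auto simp: A_def)
  finally show ?thesis by (simp add: incidence_const_def A_def algebra_simps)
qed

corollary integral_incidence_le:
  fixes F :: "(real^'m \<Rightarrow> real) set"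
  assumes "CARD('m) \<ge> 2" and F: "F \<subseteq> C2X" and sep: "separated (c2dist unit_cube) F \<delta>"
    and tc: "delta_t_C_set C2X (c2dist unit_cube) F \<delta> t (\<delta> powr (-\<epsilon>))"
    and cin: "cinematic unit_cube K D \<alpha> \<eta>0 F" and \<delta>: "0 < \<delta>" "\<delta> \<le> 1" and t: "0 < t" "t \<le> 1"
    and log: "(1 + log 2 (1 / \<delta>))\<^sup>2 \<le> \<delta> powr (-\<epsilon>)"
  shows "set_lebesgue_integral lborel (unit_cube \<times> {0..1}) (\<lambda>p. (\<Sum>f\<in>F. indicator (fdelta f \<delta>) p)\<^sup>2)
    \<le> incidence_const CARD('m) K D * \<delta> powr (-2*\<epsilon>) * real (card F) ^ 2 * \<delta> powr (1 + t)"
proof (cases "finite F")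
  case True
  have "0 \<le> incidence_const CARD('m) K D" by (simp add: incidence_const_def)
  then have "incidence_const CARD('m) K D * (1 + log 2 (1 / \<delta>))\<^sup>2 * \<delta> powr (1 + t - \<epsilon>)
        * real (card F)^2
      \<le> incidence_const CARD('m) K D * \<delta> powr (-\<epsilon>) * \<delta> powr (1 + t - \<epsilon>) * real (card F)^2"
    using log by (intro mult_right_mono mult_left_mono) auto
  also have "\<dots> = incidence_const CARD('m) K D * \<delta> powr (-2*\<epsilon>) * real (card F) ^ 2 * \<delta> powr (1 + t)"
    by (simp add: powr_add[symmetric] algebra_simps)
  finally show ?thesis using integral_incidence_le_log[OF assms(1) True F sep tc cin \<delta> t] by linarith
  \<comment> \<open>for infinite \<open>F\<close> both the sum and \<open>card F\<close> are \<open>0\<close>\<close>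
qed simp

theorem theorem1p17:
  assumes "CARD('m::finite) \<ge> 2"
  shows "\<exists>Cst :: real \<Rightarrow> real \<Rightarrow> (real \<Rightarrow> real) \<Rightarrow> real \<Rightarrow> real.
    \<forall>\<epsilon>>0. \<forall>t\<in>{0<..1}. \<exists>\<delta>0\<in>{0<..1/2}. \<forall>\<delta>\<in>{0<..\<delta>0}.
    \<forall>(F :: (real^'m \<Rightarrow> real) set) K D \<alpha> \<eta>0.
      F \<noteq> {} \<and> F \<subseteq> C2X \<and> separated (c2dist unit_cube) F \<delta> \<and>
      delta_t_C_set C2X (c2dist unit_cube) F \<delta> t (\<delta> powr (-\<epsilon>)) \<and>
      cinematic unit_cube K D \<alpha> \<eta>0 F \<longrightarrow>
      set_lebesgue_integral lborel (unit_cube \<times> {0..1})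
         (\<lambda>p. (\<Sum>f\<in>F. indicator (fdelta f \<delta>) p)\<^sup>2)
        \<le> Cst K D \<alpha> \<eta>0 * \<delta> powr (-2*\<epsilon>) * real (card F) ^ 2 * \<delta> powr (1 + t)"
proof (intro exI[of _ "\<lambda>K D _ _. incidence_const CARD('m) K D"] allI impI ballI)
  fix \<epsilon> t :: real assume "0 < \<epsilon>" and t: "t \<in> {0<..1}"
  obtain \<delta>0 where \<delta>0: "\<delta>0 \<in> {0<..1/2}" "\<And>\<delta>. \<delta> \<in> {0<..\<delta>0} \<Longrightarrow> (1 + log 2 (1 / \<delta>))\<^sup>2 \<le> \<delta> powr (-\<epsilon>)"
    using log_square_le_powr[OF \<open>0 < \<epsilon>\<close>] by blast
  show "\<exists>\<delta>0\<in>{0<..1/2}. \<forall>\<delta>\<in>{0<..\<delta>0}. \<forall>(F :: (real^'m \<Rightarrow> real) set) K D \<alpha> \<eta>0.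
      F \<noteq> {} \<and> F \<subseteq> C2X \<and> separated (c2dist unit_cube) F \<delta> \<and>
      delta_t_C_set C2X (c2dist unit_cube) F \<delta> t (\<delta> powr (-\<epsilon>)) \<and> cinematic unit_cube K D \<alpha> \<eta>0 F \<longrightarrow>
      set_lebesgue_integral lborel (unit_cube \<times> {0..1}) (\<lambda>p. (\<Sum>f\<in>F. indicator (fdelta f \<delta>) p)\<^sup>2)
        \<le> incidence_const CARD('m) K D * \<delta> powr (-2*\<epsilon>) * real (card F) ^ 2 * \<delta> powr (1 + t)"
    using \<delta>0 t by (intro bexI[OF _ \<delta>0(1)] ballI allI impI integral_incidence_le[OF assms]) auto
qed

end
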